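(* Let $L$ be an $r\times m$ matrix of integers of full rank $r$. There exist $K_L>0$ and $p_0$ depending only on $L$ such that for every prime $p\ge p_0$ and all $p$-measurable sets $A_1,\ldots,A_m\subset\mathbb{T}$, there exist $j_1/p,\ldots,j_K/p\in J(L,p)$ with $K\le K_L$ such that \[S_{L,\mathbb{T}}(A_1,\ldots,A_m)=\sum_{k=1}^{K}\lambda_k\,S_{L,\mathbb{Z}_p}\big(A_1'-j_k(1),\ldots,A_m'-j_k(m)\big),\] where $\lambda_k=p^{m-r}\mu_{L,\mathbb{T}}\big((j_k/p+[0,1/p)^m)\cap\ker_{\mathbb{T}}L\big)$.
   Context: $\mathbb{T}=\mathbb{R}/\mathbb{Z}$, and $\mathbb{T}^m$ is identified with $[0,1)^m$ with coordinatewise addition mod 1. A set $A\subset\mathbb{T}$ is $p$-measurable if it is a union of intervals $[(x-1)/p,x/p)$, $x\in\{1,\ldots,p\}$. For a $p$-measurable $A$, $A'\subset\mathbb{Z}_p$ is defined by $1_{A'}(x)=1_A(x/p)$ (identifying $x\in\mathbb{Z}_p$ with $\{0,\ldots,p-1\}$). For a compact abelian group $G$, $\ker_G L=\{x\in G^m:Lx=0\}$ with normalized Haar probability measure $\mu_{L,G}$, and $S_{L,G}(B_1,\ldots,B_m)=\mu_{L,G}\big((B_1\times\cdots\times B_m)\cap\ker_G L\big)$; for $G=\mathbb{Z}_p$ this is the proportion of elements of $\ker_{\mathbb{Z}_p}L$ lying in $B_1\times\cdots\times B_m$. For $j\in\mathbb{Z}_p^m$ with coordinates $j(i)\in\{0,\ldots,p-1\}$,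 $j/p=(j(1)/p,\ldots,j(m)/p)\in\mathbb{T}^m$; $\Lambda=\{j/p:j\in\mathbb{Z}_p^m\}$ and $J(L,p)=\{j/p\in\Lambda:\ \mu_{L,\mathbb{T}}\big((j/p+[0,1/p)^m)\cap\ker_{\mathbb{T}}L\big)>0\}$. *)

theory Defs
  imports "HOL-Analysis.Analysis" "HOL-Computational_Algebra.Primes"
begin

text \<open>The torus T^m, identified with [0,1)^m inside real^'m, with coordinatewise addition mod 1.\<close>
definition torus :: "(real^'m) set" where
  "torus = {x. \<forall>i. 0 \<le> x$i \<and> x$i < 1}"

definition tadd :: "real^'m \<Rightarrow> real^'m \<Rightarrow> real^'m" where
  "tadd x y = (\<chi> i. frac (x$i + y$i))"

definition kerT :: "int^'m^'r \<Rightarrow> (real^'m) set" where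
  "kerT L = {x \<in> torus. \<forall>k. (\<Sum>i\<in>UNIV. real_of_int (L$k$i) * x$i) \<in> \<int>}"

definition is_haar_kerT :: "int^'m^'r \<Rightarrow> (real^'m) measure \<Rightarrow> bool" where
  "is_haar_kerT L M \<longleftrightarrow> space M = kerT L \<and> sets M = sets (restrict_space borel (kerT L))
     \<and> emeasure M (kerT L) = 1
     \<and> (\<forall>a\<in>kerT L. \<forall>B\<in>sets M. emeasure M (tadd a ` B) = emeasure M B)"

definition haarT :: "int^'m^'r \<Rightarrow> (real^'m) measure" where
  "haarT L = (THE M. is_haar_kerT L M)"

definition muT :: "int^'m^'r \<Rightarrow> (real^'m) set \<Rightarrow> real" where
  "muT L S = measure (haarT L) (S \<inter> kerT L)"

definition S_T :: "int^'m^'r \<Rightarrow> ('m \<Rightarrow> real set) \<Rightarrow> real" where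
  "S_T L A = muT L {x. \<forall>i. x$i \<in> A i}"

definition p_measurable :: "nat \<Rightarrow> real set \<Rightarrow> bool" where
  "p_measurable p A \<longleftrightarrow> (\<exists>X \<subseteq> {1..p}. A = (\<Union>x\<in>X. {real (x - 1) / real p ..< real x / real p}))"

definition prime_set :: "nat \<Rightarrow> real set \<Rightarrow> int set" where
  "prime_set p A = {x. 0 \<le> x \<and> x < int p \<and> real_of_int x / real p \<in> A}"

definition shiftZ :: "nat \<Rightarrow> int set \<Rightarrow> int \<Rightarrow> int set" where
  "shiftZ p B c = {y. 0 \<le> y \<and> y < int p \<and> (y + c) mod int p \<in> B}"

text \<open>ker_{Z_p} L, elements of Z_p^m represented by 'm \<Rightarrow> int with values in {0..p-1}.\<close>
definition kerZp :: "int^'m^'r \<Rightarrow> nat \<Rightarrow> ('m \<Rightarrow> int) set" where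
  "kerZp L p = {x. (\<forall>i. 0 \<le> x i \<and> x i < int p) \<and> (\<forall>k. (\<Sum>i\<in>UNIV. L$k$i * x i) mod int p = 0)}"

definition S_Zp :: "int^'m^'r \<Rightarrow> nat \<Rightarrow> ('m \<Rightarrow> int set) \<Rightarrow> real" where
  "S_Zp L p B = real (card (kerZp L p \<inter> {x. \<forall>i. x i \<in> B i})) / real (card (kerZp L p))"

definition pbox :: "nat \<Rightarrow> ('m \<Rightarrow> int) \<Rightarrow> (real^'m) set" where
  "pbox p j = {x. \<forall>i. real_of_int (j i) / real p \<le> x$i \<and> x$i < real_of_int (j i) / real p + 1 / real p}"

text \<open>J(L,p), represented by the index vectors j (j/p is the point of Lambda).\<close>
definition Jset :: "int^'m^'r \<Rightarrow> nat \<Rightarrow> ('m \<Rightarrow> int) set" where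
  "Jset L p = {j. (\<forall>i. 0 \<le> j i \<and> j i < int p) \<and> muT L (pbox p j) > 0}"

definition lam :: "int^'m^'r \<Rightarrow> nat \<Rightarrow> ('m \<Rightarrow> int) \<Rightarrow> real" where
  "lam L p j = real p ^ (CARD('m) - CARD('r)) * muT L (pbox p j)"

end

theory Submission
  imports Defs
begin

text \<open>
  Cut the box \<open>A\<^sub>1 \<times> \<dots> \<times> A\<^sub>m\<close> into the boxes \<open>j/p + [0,1/p)\<^sup>m\<close> it consists of. Translation by
  \<open>x/p\<close> with \<open>x \<in> ker\<^sub>Z\<^sub>p L\<close> preserves \<open>ker\<^sub>T L\<close> and its Haar measure and moves box \<open>j\<close> to box
  \<open>j + x\<close>; the boxes obtained from \<open>j\<close> in this way are exactly those with the same residue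
  \<open>L j mod p\<close>. Hence the boxes of each residue class that lie inside the product contribute
  \<open>|(A' - j) \<inter> ker\<^sub>Z\<^sub>p L|\<close> times the measure of one representative box \<open>j\<close>, and
  \<open>|ker\<^sub>Z\<^sub>p L| = p\<^bsup>m-r\<^esup>\<close> as soon as \<open>p\<close> does not divide \<open>det (L L\<^sup>T)\<close>. A box meeting \<open>ker\<^sub>T L\<close>
  has \<open>L j\<close> within a fixed distance of \<open>p \<int>\<^sup>r\<close>, so only boundedly many classes occur.

  The Haar measure itself is unique by Fubini, and exists as an average of push-forwards of
  Lebesgue measure on the torus along \<open>x \<mapsto> t + D P x mod 1\<close>, where \<open>P\<close> is the orthogonal
  projection onto \<open>ker L\<close>, \<open>D = det (L L\<^sup>T)\<close> and \<open>t\<close> runs through the finite subgroup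
  \<open>{L\<^sup>T (L L\<^sup>T)\<^sup>-\<^sup>1 n mod 1 | n \<in> \<int>\<^sup>r}\<close> of the torus.
\<close>

lemma frac_eq_iff_Ints: "frac x = frac y \<longleftrightarrow> x - y \<in> \<int>"
proof
  assume "frac x = frac y"
  then have "x - y = of_int (\<lfloor>x\<rfloor> - \<lfloor>y\<rfloor>)" by (simp add: frac_def)
  then show "x - y \<in> \<int>" by simp
next
  assume "x - y \<in> \<int>"
  then obtain k where "x = y + of_int k" by (metis Ints_cases add.commute diff_add_cancel)
  then show "frac x = frac y" by (simp add: frac_def)
qed

lemma frac_frac_add: "frac (frac x + y) = frac (x + y)"
  unfolding frac_eq_iff_Ints by (simp add: frac_def)

definition vec_frac :: "real^'n \<Rightarrow> real^'n" where
  "vec_frac v = (\<chi> i. frac (v$i))"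

definition torus_neg :: "real^'n \<Rightarrow> real^'n" where
  "torus_neg a = vec_frac (- a)"

definition int_vec :: "real^'n \<Rightarrow> bool" where
  "int_vec v \<longleftrightarrow> (\<forall>i. v$i \<in> \<int>)"

definition int_mat :: "real^'n^'m \<Rightarrow> bool" where
  "int_mat A \<longleftrightarrow> (\<forall>i j. A$i$j \<in> \<int>)"

definition vec_cong :: "real^'n \<Rightarrow> real^'n \<Rightarrow> bool" where
  "vec_cong u w \<longleftrightarrow> int_vec (u - w)"

lemma vec_frac_nth: "vec_frac v $ i = frac (v$i)"
  by (simp add: vec_frac_def)

lemma tadd_eq_vec_frac: "tadd a x = vec_frac (a + x)"
  by (simp add: vec_eq_iff tadd_def vec_frac_nth)

lemma mem_torus: "x \<in> torus \<longleftrightarrow> (\<forall>i. 0 \<le> x$i \<and> x$i < 1)"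
  by (simp add: torus_def)

lemma vec_frac_in_torus [simp]: "vec_frac v \<in> torus"
  by (simp add: mem_torus vec_frac_nth frac_lt_1)

lemma vec_frac_torus: "x \<in> torus \<Longrightarrow> vec_frac x = x"
  by (simp add: mem_torus vec_eq_iff vec_frac_nth frac_eq)

lemma tadd_in_torus [simp]: "tadd a x \<in> torus"
  by (simp add: tadd_eq_vec_frac)

lemma torus_neg_in_torus [simp]: "torus_neg a \<in> torus"
  by (simp add: torus_neg_def)

lemma int_vec_add: "int_vec u \<Longrightarrow> int_vec w \<Longrightarrow> int_vec (u + w)"
  and int_vec_diff: "int_vec u \<Longrightarrow> int_vec w \<Longrightarrow> int_vec (u - w)"
  and int_vec_minus: "int_vec u \<Longrightarrow> int_vec (- u)"
  and int_vec_zero: "int_vec 0"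
  and int_vec_scaleR: "c \<in> \<int> \<Longrightarrow> int_vec u \<Longrightarrow> int_vec (c *\<^sub>R u)"
  by (auto simp: int_vec_def)

lemma matrix_vector_mult_uminus: "(A::real^'n^'m) *v (- x) = - (A *v x)"
  using matrix_vector_mult_diff_distrib[of A 0 x] by simp

lemma int_mat_mult_int_vec: "int_mat A \<Longrightarrow> int_vec v \<Longrightarrow> int_vec (A *v v)"
  by (auto simp: int_mat_def int_vec_def matrix_vector_mult_def intro!: Ints_sum Ints_mult)

lemma int_mat_transpose: "int_mat A \<Longrightarrow> int_mat (transpose A)"
  by (simp add: int_mat_def transpose_def)

lemma int_mat_mult: "int_mat A \<Longrightarrow> int_mat B \<Longrightarrow> int_mat (A ** B)"
  by (auto simp: int_mat_def matrix_matrix_mult_def intro!: Ints_sum Ints_mult)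

lemma int_mat_det: "int_mat A \<Longrightarrow> det A \<in> \<int>"
  unfolding det_def int_mat_def by (auto intro!: Ints_sum Ints_mult Ints_prod)

lemma vec_cong_refl: "vec_cong u u"
  by (simp add: vec_cong_def int_vec_zero)

lemma vec_cong_sym: "vec_cong u w \<Longrightarrow> vec_cong w u"
  unfolding vec_cong_def by (metis int_vec_minus minus_diff_eq)

lemma vec_cong_trans: "vec_cong u v \<Longrightarrow> vec_cong v w \<Longrightarrow> vec_cong u w"
  unfolding vec_cong_def by (drule (1) int_vec_add) simp

lemma vec_cong_add: "vec_cong u u' \<Longrightarrow> vec_cong w w' \<Longrightarrow> vec_cong (u + w) (u' + w')"
  unfolding vec_cong_def by (drule (1) int_vec_add) (simp add: algebra_simps)

lemma vec_cong_diff: "vec_cong u u' \<Longrightarrow> vec_cong w w' \<Longrightarrow> vec_cong (u - w) (u' - w')"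
  unfolding vec_cong_def by (drule (1) int_vec_diff) (simp add: algebra_simps)

lemma vec_cong_int_mat: "int_mat A \<Longrightarrow> vec_cong u w \<Longrightarrow> vec_cong (A *v u) (A *v w)"
  unfolding vec_cong_def by (metis int_mat_mult_int_vec matrix_vector_mult_diff_distrib)

lemma vec_cong_int_vec: "vec_cong u w \<Longrightarrow> int_vec w \<Longrightarrow> int_vec u"
  unfolding vec_cong_def by (drule (1) int_vec_add) simp

lemma vec_frac_eq_iff: "vec_frac u = vec_frac w \<longleftrightarrow> vec_cong u w"
  by (simp add: vec_eq_iff vec_frac_nth vec_cong_def int_vec_def frac_eq_iff_Ints)

lemma vec_cong_vec_frac: "vec_cong (vec_frac u) u"
  by (simp add: vec_cong_def int_vec_def vec_frac_nth frac_def)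

lemma tadd_comm: "tadd a x = tadd x a"
  by (simp add: tadd_eq_vec_frac add.commute)

lemma tadd_assoc: "tadd (tadd a b) c = tadd a (tadd b c)"
  unfolding tadd_eq_vec_frac vec_frac_eq_iff
  by (rule vec_cong_trans[OF vec_cong_add[OF vec_cong_vec_frac vec_cong_refl]])
    (simp add: vec_cong_sym[OF vec_cong_add[OF vec_cong_refl vec_cong_vec_frac]] add.assoc)

lemma vec_frac_eq_torusI: "x \<in> torus \<Longrightarrow> vec_cong u x \<Longrightarrow> vec_frac u = x"
  using vec_frac_eq_iff[of u x] vec_frac_torus by simp

lemma tadd_zero: "x \<in> torus \<Longrightarrow> tadd x 0 = x"
  by (simp add: tadd_eq_vec_frac vec_frac_torus)

lemma vec_cong_uminus: "vec_cong u w \<Longrightarrow> vec_cong (- u) (- w)"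
  using vec_cong_diff[OF vec_cong_refl[of 0]] by simp

lemma torus_neg_tadd_cancel: "x \<in> torus \<Longrightarrow> tadd (torus_neg a) (tadd a x) = x"
  unfolding tadd_eq_vec_frac torus_neg_def
  using vec_cong_add[OF vec_cong_vec_frac[of "- a"] vec_cong_vec_frac[of "a + x"]]
  by (simp add: vec_frac_eq_torusI)

lemma tadd_torus_neg_cancel: "x \<in> torus \<Longrightarrow> tadd a (tadd (torus_neg a) x) = x"
  unfolding tadd_eq_vec_frac torus_neg_def
  using vec_cong_add[OF vec_cong_refl[of a]
      vec_cong_trans[OF vec_cong_vec_frac vec_cong_add[OF vec_cong_vec_frac[of "- a"] vec_cong_refl[of x]]]]
  by (simp add: vec_frac_eq_torusI)

lemma tadd_torus_neg_self: "tadd a (torus_neg a) = 0"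
  unfolding tadd_eq_vec_frac torus_neg_def
  using vec_cong_add[OF vec_cong_refl[of a] vec_cong_vec_frac[of "- a"]]
  by (simp add: vec_frac_eq_torusI mem_torus)

lemma torus_neg_torus_neg: "x \<in> torus \<Longrightarrow> torus_neg (torus_neg x) = x"
  unfolding torus_neg_def
  using vec_cong_uminus[OF vec_cong_vec_frac[of "- x"]]
  by (simp add: vec_frac_eq_torusI)

lemma tadd_image:
  assumes "B \<subseteq> torus"
  shows "tadd a ` B = {y \<in> torus. tadd (torus_neg a) y \<in> B}"
proof safe
  fix b assume "b \<in> B"
  then show "tadd (torus_neg a) (tadd a b) \<in> B"
    using assms torus_neg_tadd_cancel[of b a] by auto
next
  fix y assume "y \<in> torus" "tadd (torus_neg a) y \<in> B"
  moreover have "y = tadd a (tadd (torus_neg a) y)"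
    using \<open>y \<in> torus\<close> by (simp only: tadd_torus_neg_cancel)
  ultimately show "y \<in> tadd a ` B" by blast
qed simp

section \<open>The kernel of \<open>L\<close> on the torus and uniqueness of its Haar measure\<close>

definition real_mat :: "int^'m^'r \<Rightarrow> real^'m^'r" where
  "real_mat L = (\<chi> k i. real_of_int (L$k$i))"

lemma int_mat_real_mat: "int_mat (real_mat L)"
  by (simp add: int_mat_def real_mat_def)

lemma mem_kerT: "x \<in> kerT L \<longleftrightarrow> x \<in> torus \<and> int_vec (real_mat L *v x)"
  by (simp add: kerT_def int_vec_def real_mat_def matrix_vector_mult_def)

lemma kerT_subset_torus: "kerT L \<subseteq> torus"
  by (auto simp: kerT_def)

lemma tadd_kerT: "a \<in> kerT L \<Longrightarrow> x \<in> kerT L \<Longrightarrow> tadd a x \<in> kerT L"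
  unfolding mem_kerT tadd_eq_vec_frac
  by (metis int_vec_add matrix_vector_right_distrib vec_cong_int_mat vec_cong_int_vec
      vec_cong_vec_frac int_mat_real_mat vec_frac_in_torus)

lemma torus_neg_kerT: "a \<in> kerT L \<Longrightarrow> torus_neg a \<in> kerT L"
  unfolding mem_kerT torus_neg_def
  by (metis int_vec_minus matrix_vector_mult_uminus vec_cong_int_mat vec_cong_int_vec
      vec_cong_vec_frac int_mat_real_mat vec_frac_in_torus)

lemma vec_borel_measurableI:
  fixes f :: "'a \<Rightarrow> real^'n"
  assumes "\<And>i. (\<lambda>x. f x $ i) \<in> borel_measurable M"
  shows "f \<in> borel_measurable M"
proof (rule iffD2[OF borel_measurable_euclidean_space], rule ballI)
  fix b :: "real^'n" assume "b \<in> Basis"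
  then obtain j where "b = axis j 1" by (auto simp: Basis_vec_def)
  then have "(\<lambda>x. f x \<bullet> b) = (\<lambda>x. f x $ j)" by (simp add: inner_axis)
  then show "(\<lambda>x. f x \<bullet> b) \<in> borel_measurable M" using assms by simp
qed

lemma vec_nth_borel [measurable]: "(\<lambda>x::real^'n. x $ i) \<in> borel_measurable borel"
  by (intro borel_measurable_continuous_onI continuous_intros)

lemma frac_borel [measurable]: "(\<lambda>x::real. frac x) \<in> borel_measurable borel"
  unfolding frac_def by measurable

lemma vec_frac_measurable:
  "f \<in> borel_measurable M \<Longrightarrow> (\<lambda>x. vec_frac (f x) :: real^'n) \<in> borel_measurable M"
  by (rule vec_borel_measurableI) (simp add: vec_frac_nth)

lemma tadd_measurable:
  "f \<in> borel_measurable M \<Longrightarrow> g \<in> borel_measurable M \<Longrightarrow>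
    (\<lambda>x. tadd (f x) (g x) :: real^'n) \<in> borel_measurable M"
  unfolding tadd_eq_vec_frac by (intro vec_frac_measurable borel_measurable_add)

lemma torus_borel: "(torus :: (real^'n) set) \<in> sets borel"
proof -
  have "torus = (\<Inter>i. {x::real^'n. 0 \<le> x$i} \<inter> {x. x$i < 1})"
    by (auto simp: torus_def)
  also have "\<dots> \<in> sets borel" by measurable
  finally show ?thesis .
qed

lemma Ints_borel: "(\<int> :: real set) \<in> sets borel"
proof -
  have "\<int> = (\<Union>k. {real_of_int k})" by (auto elim: Ints_cases)
  also have "\<dots> \<in> sets borel" by measurable
  finally show ?thesis .
qed

lemma kerT_borel: "kerT L \<in> sets borel"
proof -
  have "kerT L = torus \<inter> (\<Inter>k. (\<lambda>x. \<Sum>i\<in>UNIV. real_of_int (L$k$i) * x$i) -` \<int> \<inter> space borel)"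
    by (auto simp: kerT_def)
  also have "\<dots> \<in> sets borel"
    by (intro sets.Int torus_borel sets.finite_INT measurable_sets[OF _ Ints_borel]) auto
  finally show ?thesis .
qed

lemma sets_restrict_kerT: "B \<in> sets (restrict_space borel (kerT L)) \<longleftrightarrow> B \<subseteq> kerT L \<and> B \<in> sets borel"
  by (rule sets_restrict_space_iff) (simp add: kerT_borel)

lemma vimage_tadd_kerT:
  assumes x: "x \<in> kerT L" and B: "B \<subseteq> kerT L"
  shows "tadd x -` B \<inter> kerT L = tadd (torus_neg x) ` B"
proof -
  have xt: "x \<in> torus" using x kerT_subset_torus by auto
  have "tadd (torus_neg x) ` B = {y \<in> torus. tadd x y \<in> B}"
    using tadd_image[of B "torus_neg x"] B kerT_subset_torus torus_neg_torus_neg[OF xt] by auto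
  moreover have "y \<in> kerT L" if "y \<in> torus" "tadd x y \<in> B" for y
    using tadd_kerT[OF torus_neg_kerT[OF x], of "tadd x y"] torus_neg_tadd_cancel[of y x] that B
    by auto
  ultimately show ?thesis using kerT_subset_torus by auto
qed

lemma haar_finite_measure: "is_haar_kerT L M \<Longrightarrow> finite_measure M"
  by (rule finite_measureI) (simp add: is_haar_kerT_def)

lemma haar_measurable_id:
  fixes L :: "int^'m^'r" and M :: "(real^'m) measure"
  assumes "is_haar_kerT L M"
  shows "(\<lambda>x. x) \<in> borel_measurable M"
proof -
  have "measurable M (borel :: (real^'m) measure) = measurable (restrict_space borel (kerT L)) borel"
    by (rule measurable_cong_sets) (use assms in \<open>auto simp: is_haar_kerT_def\<close>)
  then show ?thesis by (simp add: measurable_restrict_space1)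
qed

lemma tadd_image_restrict_kerT_sets:
  assumes a: "a \<in> kerT L" and B: "B \<in> sets (restrict_space borel (kerT L))"
  shows "tadd a ` B \<in> sets (restrict_space borel (kerT L))"
proof -
  have B': "B \<subseteq> kerT L" "B \<in> sets borel" using B by (auto simp: sets_restrict_kerT)
  have "torus_neg (torus_neg a) = a"
    using a kerT_subset_torus torus_neg_torus_neg by blast
  then have "tadd a ` B = tadd (torus_neg a) -` B \<inter> kerT L"
    using vimage_tadd_kerT[OF torus_neg_kerT[OF a] B'(1)] by simp
  also have "\<dots> \<in> sets (restrict_space borel (kerT L))"
    using measurable_sets[OF tadd_measurable[OF measurable_const measurable_ident] B'(2)] kerT_borel
    by (auto simp: sets_restrict_kerT)
  finally show ?thesis .
qed

lemma haar_nn_integral_tadd: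
  assumes H: "is_haar_kerT L M" and x: "x \<in> kerT L" and B: "B \<in> sets M"
  shows "(\<integral>\<^sup>+ y. indicator B (tadd x y) \<partial>M) = emeasure M B"
proof -
  have sp: "space M = kerT L" using H by (simp add: is_haar_kerT_def)
  have Bk: "B \<subseteq> kerT L" using B sets.sets_into_space sp by blast
  have "(\<integral>\<^sup>+ y. indicator B (tadd x y) \<partial>M) = (\<integral>\<^sup>+ y. indicator (tadd (torus_neg x) ` B) y \<partial>M)"
    by (rule nn_integral_cong) (use vimage_tadd_kerT[OF x Bk] sp in \<open>auto simp: indicator_def\<close>)
  also have "\<dots> = emeasure M (tadd (torus_neg x) ` B)"
    using H B tadd_image_restrict_kerT_sets[OF torus_neg_kerT[OF x]]
    by (intro nn_integral_indicator) (simp add: is_haar_kerT_def)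
  also have "\<dots> = emeasure M B" using H torus_neg_kerT[OF x] B by (simp add: is_haar_kerT_def)
  finally show ?thesis .
qed

text \<open>Fubini applied to \<open>(x, y) \<mapsto> 1\<^sub>B(x + y)\<close> shows that any two Haar measures agree.\<close>

lemma haar_unique:
  assumes HM: "is_haar_kerT L M" and HN: "is_haar_kerT L N"
  shows "M = N"
proof (rule measure_eqI)
  show sets: "sets M = sets N" using HM HN by (simp add: is_haar_kerT_def)
  fix B assume B: "B \<in> sets M"
  interpret M: finite_measure M by (rule haar_finite_measure[OF HM])
  interpret N: finite_measure N by (rule haar_finite_measure[OF HN])
  interpret P: pair_sigma_finite M N by unfold_locales
  have Bb: "B \<in> sets borel" using B HM sets_restrict_kerT by (auto simp: is_haar_kerT_def)
  let ?f = "\<lambda>z. indicator B (tadd (fst z) (snd z)) :: ennreal"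
  have "(\<lambda>z. tadd (fst z) (snd z)) \<in> borel_measurable (M \<Otimes>\<^sub>M N)"
    by (intro tadd_measurable measurable_compose[OF measurable_fst haar_measurable_id[OF HM]]
        measurable_compose[OF measurable_snd haar_measurable_id[OF HN]])
  then have f: "?f \<in> borel_measurable (M \<Otimes>\<^sub>M N)"
    by (rule measurable_compose[OF _ borel_measurable_indicator[OF Bb]])
  have spM: "space M = kerT L" and spN: "space N = kerT L" and BN: "B \<in> sets N"
    using HM HN B sets by (auto simp: is_haar_kerT_def)
  have "emeasure N B = (\<integral>\<^sup>+ x. emeasure N B \<partial>M)"
    using HM by (simp add: is_haar_kerT_def)
  also have "\<dots> = (\<integral>\<^sup>+ x. \<integral>\<^sup>+ y. ?f (x, y) \<partial>N \<partial>M)"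
    by (rule nn_integral_cong) (simp add: haar_nn_integral_tadd[OF HN _ BN] spM)
  also have "\<dots> = (\<integral>\<^sup>+ y. \<integral>\<^sup>+ x. ?f (x, y) \<partial>M \<partial>N)"
    using N.nn_integral_fst[OF f] P.nn_integral_snd[OF f] by simp
  also have "\<dots> = (\<integral>\<^sup>+ y. emeasure M B \<partial>N)"
    by (rule nn_integral_cong) (simp add: tadd_comm[of _ "_::real^_"] haar_nn_integral_tadd[OF HM _ B] spN)
  also have "\<dots> = emeasure M B"
    using HN by (simp add: is_haar_kerT_def)
  finally show "emeasure M B = emeasure N B" ..
qed

lemma haarT_eq: "is_haar_kerT L M \<Longrightarrow> haarT L = M"
  unfolding haarT_def using haar_unique by blast

section \<open>A parametrisation of the kernel\<close>

definition gram :: "int^'m^'r \<Rightarrow> real^'r^'r" where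
  "gram L = real_mat L ** transpose (real_mat L)"

definition gram_det :: "int^'m^'r \<Rightarrow> real" where
  "gram_det L = det (gram L)"

definition gram_inv :: "int^'m^'r \<Rightarrow> real^'r^'r" where
  "gram_inv L = matrix_inv (gram L)"

text \<open>\<open>ker_proj L x\<close> is \<open>gram_det L\<close> times the orthogonal projection of \<open>x\<close> onto the kernel of \<open>L\<close>;
  the factor makes it map integer vectors to integer vectors.\<close>

definition ker_proj :: "int^'m^'r \<Rightarrow> real^'m \<Rightarrow> real^'m" where
  "ker_proj L x = gram_det L *\<^sub>R x
     - transpose (real_mat L) *v (gram_det L *\<^sub>R (gram_inv L *v (real_mat L *v x)))"

definition coset_rep :: "int^'m^'r \<Rightarrow> real^'r \<Rightarrow> real^'m" where
  "coset_rep L n = vec_frac (transpose (real_mat L) *v (gram_inv L *v n))"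

definition coset_reps :: "int^'m^'r \<Rightarrow> (real^'m) set" where
  "coset_reps L = coset_rep L ` {n. int_vec n}"

definition ker_param :: "int^'m^'r \<Rightarrow> real^'m \<Rightarrow> real^'m \<Rightarrow> real^'m" where
  "ker_param L t x = tadd t (vec_frac (ker_proj L x))"

lemma int_mat_gram: "int_mat (gram L)"
  by (simp add: gram_def int_mat_mult int_mat_transpose int_mat_real_mat)

lemma gram_det_Ints: "gram_det L \<in> \<int>"
  by (simp add: gram_det_def int_mat_det int_mat_gram)

lemma ker_proj_add: "ker_proj L (u + w) = ker_proj L u + ker_proj L w"
  and ker_proj_diff: "ker_proj L (u - w) = ker_proj L u - ker_proj L w"
  by (simp_all add: ker_proj_def algebra_simps)

lemma finite_vec_range:
  assumes "finite F"
  shows "finite {t :: 'a^'n. \<forall>i. t$i \<in> F}"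
proof -
  have "{t :: 'a^'n. \<forall>i. t$i \<in> F} \<subseteq> vec_lambda ` (PiE UNIV (\<lambda>_. F))"
  proof
    fix t :: "'a^'n" assume "t \<in> {t. \<forall>i. t$i \<in> F}"
    then have "vec_nth t \<in> PiE UNIV (\<lambda>_. F)" by auto
    then show "t \<in> vec_lambda ` (PiE UNIV (\<lambda>_. F))" by (metis image_eqI vec_nth_inverse)
  qed
  moreover have "finite (PiE UNIV (\<lambda>_::'n. F))" using assms by (intro finite_PiE) auto
  ultimately show ?thesis by (meson finite_imageI finite_subset)
qed

lemma finite_unit_interval_denom:
  assumes "(d::real) \<noteq> 0"
  shows "finite {y. 0 \<le> y \<and> y < 1 \<and> d * y \<in> \<int>}"
proof -
  have "{y. 0 \<le> y \<and> y < 1 \<and> d * y \<in> \<int>} \<subseteq> (\<lambda>k. real_of_int k / d) ` {-\<lceil>\<bar>d\<bar>\<rceil>..\<lceil>\<bar>d\<bar>\<rceil>}"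
  proof
    fix y assume y: "y \<in> {y. 0 \<le> y \<and> y < 1 \<and> d * y \<in> \<int>}"
    then obtain k where k: "d * y = real_of_int k" by (auto elim: Ints_cases)
    have "\<bar>real_of_int k\<bar> = \<bar>d\<bar> * y" unfolding k[symmetric] abs_mult using y by simp
    also have "\<dots> \<le> \<bar>d\<bar>" using y by (simp add: mult_left_le)
    finally have "k \<in> {-\<lceil>\<bar>d\<bar>\<rceil>..\<lceil>\<bar>d\<bar>\<rceil>}" by auto linarith+
    moreover have "y = real_of_int k / d" using k assms by (simp add: field_simps)
    ultimately show "y \<in> (\<lambda>k. real_of_int k / d) ` {-\<lceil>\<bar>d\<bar>\<rceil>..\<lceil>\<bar>d\<bar>\<rceil>}" by auto
  qed
  then show ?thesis by (rule finite_subset) simp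
qed

locale full_rank_int_matrix =
  fixes L :: "int^'m^'r"
  assumes full_rank: "rank (real_mat L) = CARD('r)"
begin

lemma card_rows_le_card_cols: "CARD('r) \<le> CARD('m)"
  using rank_bound[of "real_mat L"] full_rank by simp

lemma inj_transpose_mult: "inj ((*v) (transpose (real_mat L)))"
proof -
  have "rank (transpose (real_mat L)) = CARD('r)" using full_rank by (simp add: rank_transpose)
  then show ?thesis by (simp add: full_rank_injective)
qed

lemma inj_gram_mult: "inj ((*v) (gram L))"
proof (rule injI)
  fix x y assume "gram L *v x = gram L *v y"
  then have "(x - y) \<bullet> (gram L *v (x - y)) = 0" by (simp add: matrix_vector_mult_diff_distrib)
  moreover have "(x - y) \<bullet> (gram L *v (x - y))
      = (transpose (real_mat L) *v (x - y)) \<bullet> (transpose (real_mat L) *v (x - y))"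
    unfolding gram_def matrix_vector_mul_assoc[symmetric] dot_lmul_matrix[symmetric] by simp
  ultimately have "transpose (real_mat L) *v (x - y) = transpose (real_mat L) *v 0" by simp
  then show "x = y" using injD[OF inj_transpose_mult] by fastforce
qed

lemma invertible_gram: "invertible (gram L)"
  using inj_gram_mult by (simp add: invertible_left_inverse matrix_left_invertible_injective)

lemma gram_det_nonzero: "gram_det L \<noteq> 0"
  using invertible_gram by (simp add: gram_det_def invertible_det_nz)

lemma gram_mult_gram_inv: "gram L *v (gram_inv L *v n) = n"
proof -
  obtain B where "gram L ** B = mat 1 \<and> B ** gram L = mat 1"
    using invertible_gram by (auto simp: invertible_def)
  then have "gram L ** matrix_inv (gram L) = mat 1 \<and> matrix_inv (gram L) ** gram L = mat 1"
    unfolding matrix_inv_def by (rule someI)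
  then show ?thesis by (simp add: gram_inv_def matrix_vector_mul_assoc)
qed

text \<open>Cramer's rule.\<close>

lemma int_vec_gram_inv: "int_vec n \<Longrightarrow> int_vec (gram_det L *\<^sub>R (gram_inv L *v n))"
proof -
  assume n: "int_vec n"
  have "(gram_det L *\<^sub>R (gram_inv L *v n)) $ k = det (\<chi> i j. if j = k then n$i else gram L$i$j)" for k
    using cramer[OF gram_det_nonzero[unfolded gram_det_def], of "gram_inv L *v n" n]
      gram_mult_gram_inv gram_det_nonzero by (simp add: gram_det_def)
  moreover have "det (\<chi> i j. if j = k then n$i else gram L$i$j) \<in> \<int>" for k
    using n int_mat_gram by (intro int_mat_det) (auto simp: int_mat_def int_vec_def)
  ultimately show ?thesis by (simp add: int_vec_def)
qed

lemma real_mat_mult_ker_proj: "real_mat L *v ker_proj L x = 0"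
proof -
  have "real_mat L *v ker_proj L x = gram_det L *\<^sub>R (real_mat L *v x)
      - gram_det L *\<^sub>R (gram L *v (gram_inv L *v (real_mat L *v x)))"
    by (simp add: ker_proj_def gram_def matrix_vector_mult_diff_distrib matrix_vector_mult_scaleR
        matrix_vector_mul_assoc matrix_mul_assoc)
  then show ?thesis by (simp add: gram_mult_gram_inv)
qed

lemma real_mat_mult_transpose_gram_inv: "real_mat L *v (transpose (real_mat L) *v (gram_inv L *v n)) = n"
  using gram_mult_gram_inv[of n]
  by (simp add: gram_def matrix_vector_mul_assoc matrix_mul_assoc del: transpose_matrix_vector)

lemma int_vec_ker_proj: "int_vec w \<Longrightarrow> int_vec (ker_proj L w)"
  unfolding ker_proj_def
  by (intro int_vec_diff int_vec_scaleR gram_det_Ints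
      int_mat_mult_int_vec[OF int_mat_transpose[OF int_mat_real_mat]] int_vec_gram_inv
      int_mat_mult_int_vec[OF int_mat_real_mat])

lemma vec_cong_ker_proj: "vec_cong u w \<Longrightarrow> vec_cong (ker_proj L u) (ker_proj L w)"
  unfolding vec_cong_def ker_proj_diff[symmetric] by (rule int_vec_ker_proj)

lemma ker_proj_scaled:
  "ker_proj L ((1 / gram_det L) *\<^sub>R a) = a - transpose (real_mat L) *v (gram_inv L *v (real_mat L *v a))"
  using gram_det_nonzero by (simp add: ker_proj_def matrix_vector_mult_scaleR)

lemma tadd_coset_rep: "tadd (coset_rep L n) (coset_rep L n') = coset_rep L (n + n')"
  unfolding coset_rep_def tadd_eq_vec_frac vec_frac_eq_iff
  by (rule vec_cong_trans[OF vec_cong_add[OF vec_cong_vec_frac vec_cong_vec_frac]])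
    (simp add: vec_cong_refl matrix_vector_right_distrib)

lemma torus_neg_coset_rep: "torus_neg (coset_rep L n) = coset_rep L (- n)"
  unfolding coset_rep_def torus_neg_def vec_frac_eq_iff
  using vec_cong_uminus[OF vec_cong_vec_frac[of "transpose (real_mat L) *v (gram_inv L *v n)"]]
  by (simp add: matrix_vector_mult_uminus)

lemma tadd_coset_reps: "t \<in> coset_reps L \<Longrightarrow> s \<in> coset_reps L \<Longrightarrow> tadd t s \<in> coset_reps L"
  unfolding coset_reps_def using tadd_coset_rep int_vec_add by fastforce

lemma torus_neg_coset_reps: "t \<in> coset_reps L \<Longrightarrow> torus_neg t \<in> coset_reps L"
  unfolding coset_reps_def using torus_neg_coset_rep int_vec_minus by fastforce

lemma coset_reps_subset_torus: "coset_reps L \<subseteq> torus"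
  unfolding coset_reps_def coset_rep_def by auto

lemma coset_rep_in_coset_reps: "int_vec n \<Longrightarrow> coset_rep L n \<in> coset_reps L"
  by (simp add: coset_reps_def)

text \<open>Every coordinate of a coset representative is a fraction with denominator \<open>gram_det L\<close>.\<close>

lemma finite_coset_reps: "finite (coset_reps L)"
proof -
  let ?F = "{y. 0 \<le> y \<and> y < 1 \<and> gram_det L * y \<in> \<int>}"
  have "t$i \<in> ?F" if "t \<in> coset_reps L" for t i
  proof -
    obtain n where n: "int_vec n" "t = coset_rep L n" using \<open>t \<in> coset_reps L\<close> by (auto simp: coset_reps_def)
    let ?w = "transpose (real_mat L) *v (gram_inv L *v n)"
    have "int_vec (gram_det L *\<^sub>R ?w)"
      using int_mat_mult_int_vec[OF int_mat_transpose[OF int_mat_real_mat] int_vec_gram_inv[OF n(1)]]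
      by (simp add: matrix_vector_mult_scaleR)
    then have "gram_det L * ?w$i \<in> \<int>" unfolding int_vec_def by simp
    then have "gram_det L * ?w$i - gram_det L * of_int \<lfloor>?w$i\<rfloor> \<in> \<int>"
      by (rule Ints_diff) (intro Ints_mult gram_det_Ints Ints_of_int)
    then have "gram_det L * frac (?w$i) \<in> \<int>" by (simp add: frac_def algebra_simps)
    then show ?thesis using n by (simp add: coset_rep_def vec_frac_nth frac_lt_1)
  qed
  then have "coset_reps L \<subseteq> {t. \<forall>i. t$i \<in> ?F}" by blast
  moreover have "finite {t::real^'m. \<forall>i. t$i \<in> ?F}"
    by (intro finite_vec_range finite_unit_interval_denom gram_det_nonzero)
  ultimately show ?thesis by (rule finite_subset)
qed

lemma card_coset_reps_pos: "card (coset_reps L) > 0"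
  using finite_coset_reps coset_rep_in_coset_reps[OF int_vec_zero] by (auto simp: card_gt_0_iff)

lemma bij_betw_tadd_coset_reps: "s \<in> coset_reps L \<Longrightarrow> bij_betw (\<lambda>t. tadd t s) (coset_reps L) (coset_reps L)"
proof (rule bij_betw_byWitness[where f' = "\<lambda>t. tadd t (torus_neg s)"])
  assume s: "s \<in> coset_reps L"
  show "\<forall>t\<in>coset_reps L. tadd (tadd t s) (torus_neg s) = t"
    using coset_reps_subset_torus by (auto simp: tadd_assoc tadd_torus_neg_self tadd_zero)
  show "\<forall>t\<in>coset_reps L. tadd (tadd t (torus_neg s)) s = t"
    using coset_reps_subset_torus
    by (auto simp: tadd_assoc tadd_comm[of "torus_neg s" s] tadd_torus_neg_self tadd_zero)
  show "(\<lambda>t. tadd t s) ` coset_reps L \<subseteq> coset_reps L"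
    using tadd_coset_reps s by auto
  show "(\<lambda>t. tadd t (torus_neg s)) ` coset_reps L \<subseteq> coset_reps L"
    using tadd_coset_reps torus_neg_coset_reps s by auto
qed

lemma ker_param_in_kerT: "t \<in> coset_reps L \<Longrightarrow> ker_param L t x \<in> kerT L"
proof -
  assume "t \<in> coset_reps L"
  then obtain n where n: "int_vec n" "t = coset_rep L n" by (auto simp: coset_reps_def)
  have "vec_cong (real_mat L *v ker_param L t x) (real_mat L *v (t + ker_proj L x))"
    unfolding ker_param_def tadd_eq_vec_frac
    by (intro vec_cong_int_mat[OF int_mat_real_mat] vec_cong_trans[OF vec_cong_vec_frac]
        vec_cong_add vec_cong_refl vec_cong_vec_frac)
  moreover have "vec_cong (real_mat L *v t)
      (real_mat L *v (transpose (real_mat L) *v (gram_inv L *v n)))"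
    unfolding n(2) coset_rep_def by (rule vec_cong_int_mat[OF int_mat_real_mat vec_cong_vec_frac])
  then have "vec_cong (real_mat L *v t) n"
    by (simp only: real_mat_mult_transpose_gram_inv)
  ultimately have "vec_cong (real_mat L *v ker_param L t x) n"
    by (simp add: matrix_vector_right_distrib real_mat_mult_ker_proj vec_cong_trans)
  then have "int_vec (real_mat L *v ker_param L t x)"
    using n(1) by (rule vec_cong_int_vec)
  then show ?thesis by (simp add: mem_kerT ker_param_def)
qed

text \<open>Split \<open>a = (a - L\<^sup>T (L L\<^sup>T)\<^sup>-\<^sup>1 L a) + L\<^sup>T (L L\<^sup>T)\<^sup>-\<^sup>1 L a\<close>: the first summand is
  \<open>ker_proj L (a / gram_det L)\<close>, so translating by \<open>a\<close> shifts the parameter by \<open>a / gram_det L\<close>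
  and the coset representative by \<open>coset_rep L (L a)\<close>.\<close>

lemma tadd_ker_param:
  "tadd a (ker_param L t x) =
     ker_param L (tadd t (coset_rep L (real_mat L *v a))) (tadd (vec_frac ((1 / gram_det L) *\<^sub>R a)) x)"
proof -
  let ?w = "transpose (real_mat L) *v (gram_inv L *v (real_mat L *v a))"
  have "vec_cong (vec_frac (t + coset_rep L (real_mat L *v a))
      + vec_frac (ker_proj L (vec_frac (vec_frac ((1 / gram_det L) *\<^sub>R a) + x))))
      (t + ?w + (ker_proj L ((1 / gram_det L) *\<^sub>R a) + ker_proj L x))"
    unfolding coset_rep_def ker_proj_add[symmetric]
    by (intro vec_cong_add vec_cong_trans[OF vec_cong_vec_frac] vec_cong_refl vec_cong_vec_frac
        vec_cong_ker_proj)
  also have "t + ?w + (ker_proj L ((1 / gram_det L) *\<^sub>R a) + ker_proj L x) = a + (t + ker_proj L x)"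
    unfolding ker_proj_scaled by (simp add: algebra_simps)
  finally have rhs: "vec_cong (vec_frac (t + coset_rep L (real_mat L *v a))
      + vec_frac (ker_proj L (vec_frac (vec_frac ((1 / gram_det L) *\<^sub>R a) + x))))
      (a + (t + ker_proj L x))" .
  have lhs: "vec_cong (a + (t + ker_proj L x)) (a + vec_frac (t + vec_frac (ker_proj L x)))"
    by (intro vec_cong_add vec_cong_refl vec_cong_sym[OF vec_cong_trans[OF vec_cong_vec_frac]]
        vec_cong_vec_frac)
  show ?thesis
    unfolding ker_param_def tadd_eq_vec_frac vec_frac_eq_iff
    by (rule vec_cong_sym[OF vec_cong_trans[OF rhs lhs]])
qed

end

section \<open>Lebesgue measure on the torus is translation invariant\<close>

text \<open>On the cell where exactly the coordinates in \<open>W\<close> wrap around, \<open>tadd b\<close> is the ordinary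
  translation by \<open>b - 1\<^sub>W\<close>, and it maps that cell onto \<open>torus_cell b W\<close>.\<close>

definition wrap_shift :: "real^'n \<Rightarrow> 'n set \<Rightarrow> real^'n" where
  "wrap_shift b W = b - (\<chi> i. if i \<in> W then 1 else 0)"

definition torus_cell :: "real^'n \<Rightarrow> 'n set \<Rightarrow> (real^'n) set" where
  "torus_cell b W = {y \<in> torus. \<forall>i. i \<in> W \<longleftrightarrow> y$i < b$i}"

lemma wrap_shift_mem_torus_cell:
  assumes "b \<in> torus"
  shows "wrap_shift b W + x \<in> torus_cell b W \<longleftrightarrow> x \<in> torus \<and> (\<forall>i. i \<in> W \<longleftrightarrow> 1 \<le> x$i + b$i)"
  using assms unfolding torus_cell_def wrap_shift_def mem_torus
  by (auto simp: algebra_simps) (smt (verit))+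

lemma tadd_eq_wrap_shift:
  assumes b: "b \<in> torus" and x: "x \<in> torus" and W: "\<And>i. i \<in> W \<longleftrightarrow> 1 \<le> x$i + b$i"
  shows "tadd b x = wrap_shift b W + x"
proof -
  have "frac (b$i + x$i) = (wrap_shift b W + x)$i" for i
  proof (cases "i \<in> W")
    case True
    moreover have "b$i < 1" "x$i < 1" using b x by (auto simp: mem_torus)
    ultimately have "frac (b$i + x$i) = b$i + x$i - 1"
      using W[of i] by (subst frac_unique_iff) auto
    then show ?thesis using True by (simp add: wrap_shift_def)
  next
    case False
    then have "frac (b$i + x$i) = b$i + x$i"
      using W[of i] b x by (subst frac_eq) (auto simp: mem_torus)
    then show ?thesis using False by (simp add: wrap_shift_def)
  qed
  then show ?thesis by (simp add: vec_eq_iff tadd_def)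
qed

lemma torus_cell_borel: "torus_cell b W \<in> sets borel"
proof -
  have *: "x \<in> (if i \<in> W then {x. x$i < b$i} else {x. b$i \<le> x$i}) \<longleftrightarrow> (i \<in> W \<longleftrightarrow> x$i < b$i)"
    for x i by auto
  have "torus_cell b W = torus \<inter> (\<Inter>i. if i \<in> W then {x. x$i < b$i} else {x. b$i \<le> x$i})"
    unfolding torus_cell_def using * by blast
  also have "\<dots> \<in> sets borel" by (intro sets.Int torus_borel sets.finite_INT) auto
  finally show ?thesis .
qed

lemma vimage_tadd_torus_eq:
  assumes "b \<in> torus"
  shows "{x \<in> torus. tadd b x \<in> E} = (\<Union>W. (\<lambda>x. wrap_shift b W + x) -` (torus_cell b W \<inter> E))"
proof safe
  fix x assume x: "x \<in> torus" "tadd b x \<in> E"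
  define W where "W = {i. 1 \<le> x$i + b$i}"
  have "tadd b x = wrap_shift b W + x"
    by (rule tadd_eq_wrap_shift[OF assms x(1)]) (simp add: W_def)
  moreover have "wrap_shift b W + x \<in> torus_cell b W"
    using wrap_shift_mem_torus_cell[OF assms] x(1) by (simp add: W_def)
  ultimately show "x \<in> (\<Union>W. (\<lambda>x. wrap_shift b W + x) -` (torus_cell b W \<inter> E))"
    using x(2) by auto
next
  fix x W assume "wrap_shift b W + x \<in> torus_cell b W" "wrap_shift b W + x \<in> E"
  then have "x \<in> torus" "tadd b x = wrap_shift b W + x"
    using wrap_shift_mem_torus_cell[OF assms] tadd_eq_wrap_shift[OF assms] by auto
  then show "x \<in> torus" "tadd b x \<in> E"
    using \<open>wrap_shift b W + x \<in> E\<close> by auto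
qed

lemma lborel_vimage_translate:
  fixes c :: "real^'n"
  assumes "S \<in> sets borel"
  shows "emeasure lborel ((\<lambda>x. c + x) -` S) = emeasure lborel S"
proof -
  have "emeasure (distr lborel borel ((+) c)) S = emeasure lborel ((+) c -` S \<inter> space lborel)"
    by (rule emeasure_distr) (auto simp: assms)
  then show ?thesis by (simp add: lborel_distr_plus)
qed

lemma lborel_tadd_invariant:
  fixes b :: "real^'n"
  assumes b: "b \<in> torus" and E: "E \<in> sets borel"
  shows "emeasure lborel {x \<in> torus. tadd b x \<in> E} = emeasure lborel (torus \<inter> E)"
proof -
  let ?P = "\<lambda>W. (\<lambda>x. wrap_shift b W + x) -` (torus_cell b W \<inter> E)"
  have cells: "torus_cell b W \<inter> E \<in> sets borel" for W
    using torus_cell_borel E by blast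
  have "disjoint_family ?P"
    unfolding disjoint_family_on_def using wrap_shift_mem_torus_cell[OF b] by auto
  moreover have "range ?P \<subseteq> sets lborel"
    using measurable_sets[OF borel_measurable_add[OF measurable_const measurable_ident] cells] by auto
  ultimately have "emeasure lborel {x \<in> torus. tadd b x \<in> E} = (\<Sum>W\<in>UNIV. emeasure lborel (?P W))"
    unfolding vimage_tadd_torus_eq[OF b] using sum_emeasure[of ?P UNIV lborel] by simp
  also have "\<dots> = (\<Sum>W\<in>UNIV. emeasure lborel (torus_cell b W \<inter> E))"
    by (intro sum.cong refl lborel_vimage_translate cells)
  also have "\<dots> = emeasure lborel (\<Union>W. torus_cell b W \<inter> E)"
    by (rule sum_emeasure) (use cells in \<open>auto simp: disjoint_family_on_def torus_cell_def\<close>)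
  also have "(\<Union>W. torus_cell b W \<inter> E) = torus \<inter> E"
    by (auto simp: torus_cell_def)
  finally show ?thesis .
qed

lemma emeasure_lborel_torus: "emeasure lborel (torus :: (real^'n) set) = 1"
proof -
  have B: "\<forall>b\<in>(Basis :: (real^'n) set). (vec 1 - 0) \<bullet> b = 1"
    by (auto simp: Basis_vec_def inner_axis)
  have "emeasure lborel (box 0 (vec 1 :: real^'n)) = 1"
    using B by (simp add: emeasure_lborel_box_eq)
  moreover have "emeasure lborel (cbox 0 (vec 1 :: real^'n)) = 1"
    using B by (simp add: emeasure_lborel_cbox_eq)
  moreover have "box 0 (vec 1) \<subseteq> (torus :: (real^'n) set)" "torus \<subseteq> cbox 0 (vec 1 :: real^'n)"
    by (auto simp: mem_box_cart mem_torus less_imp_le)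
  ultimately show ?thesis
    by (metis emeasure_mono order_antisym sets_lborel torus_borel box_borel cbox_borel)
qed

section \<open>Existence of the Haar measure\<close>

definition haar_model_fun :: "int^'m^'r \<Rightarrow> (real^'m) set \<Rightarrow> ennreal" where
  "haar_model_fun L S = ennreal (1 / real (card (coset_reps L)))
     * (\<Sum>t\<in>coset_reps L. emeasure lborel {x \<in> torus. ker_param L t x \<in> S})"

definition haar_model :: "int^'m^'r \<Rightarrow> (real^'m) measure" where
  "haar_model L = measure_of (kerT L) (sets (restrict_space borel (kerT L))) (haar_model_fun L)"

lemma ker_proj_continuous: "continuous_on UNIV (ker_proj L)"
  unfolding ker_proj_def
  by (intro continuous_intros continuous_on_compose2[OF matrix_vector_mult_linear_continuous_on]) auto

lemma ker_param_measurable: "ker_param L t \<in> borel_measurable borel"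
  unfolding ker_param_def
  by (intro tadd_measurable vec_frac_measurable borel_measurable_continuous_onI ker_proj_continuous)
    simp

lemma ker_param_vimage_sets: "S \<in> sets borel \<Longrightarrow> {x \<in> torus. ker_param L t x \<in> S} \<in> sets lborel"
proof -
  assume "S \<in> sets borel"
  have "{x \<in> torus. ker_param L t x \<in> S} = torus \<inter> (ker_param L t -` S \<inter> space borel)"
    by auto
  also have "\<dots> \<in> sets borel"
    using measurable_sets[OF ker_param_measurable \<open>S \<in> sets borel\<close>] torus_borel by auto
  finally show ?thesis by simp
qed

lemma sigma_algebra_restrict_kerT: "sigma_algebra (kerT L) (sets (restrict_space borel (kerT L)))"
  using sets.sigma_algebra_axioms[of "restrict_space borel (kerT L)"]
  by (simp add: space_restrict_space)

lemma countably_additive_haar_model_fun: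
  fixes L :: "int^'m^'r"
  shows "countably_additive (sets (restrict_space borel (kerT L))) (haar_model_fun L)"
  unfolding countably_additive_def
proof (intro allI impI)
  fix A :: "nat \<Rightarrow> (real^'m) set"
  assume A: "range A \<subseteq> sets (restrict_space borel (kerT L))" and d: "disjoint_family A"
  have Ab: "A i \<in> sets borel" for i using A sets_restrict_kerT by blast
  have "(\<Sum>i. emeasure lborel {x \<in> torus. ker_param L t x \<in> A i})
      = emeasure lborel {x \<in> torus. ker_param L t x \<in> (\<Union>i. A i)}" for t
  proof -
    have "(\<Sum>i. emeasure lborel {x \<in> torus. ker_param L t x \<in> A i})
        = emeasure lborel (\<Union>i. {x \<in> torus. ker_param L t x \<in> A i})"
      using d ker_param_vimage_sets[OF Ab]
      by (intro suminf_emeasure) (auto simp: disjoint_family_on_def)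
    also have "(\<Union>i. {x \<in> torus. ker_param L t x \<in> A i}) = {x \<in> torus. ker_param L t x \<in> (\<Union>i. A i)}"
      by auto
    finally show ?thesis .
  qed
  moreover have "(\<Sum>i. \<Sum>t\<in>coset_reps L. emeasure lborel {x \<in> torus. ker_param L t x \<in> A i})
      = (\<Sum>t\<in>coset_reps L. \<Sum>i. emeasure lborel {x \<in> torus. ker_param L t x \<in> A i})"
    by (rule suminf_sum) simp
  ultimately show "(\<Sum>i. haar_model_fun L (A i)) = haar_model_fun L (\<Union>i. A i)"
    by (simp add: haar_model_fun_def)
qed

lemma emeasure_haar_model:
  "S \<in> sets (restrict_space borel (kerT L)) \<Longrightarrow> emeasure (haar_model L) S = haar_model_fun L S"
  unfolding haar_model_def
  by (rule emeasure_measure_of_sigma[OF sigma_algebra_restrict_kerT _ countably_additive_haar_model_fun])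
    (simp add: positive_def haar_model_fun_def)

lemma sets_haar_model: "sets (haar_model L) = sets (restrict_space borel (kerT L))"
  unfolding haar_model_def by (rule sigma_algebra.sets_measure_of_eq[OF sigma_algebra_restrict_kerT])

lemma space_haar_model: "space (haar_model L) = kerT L"
  unfolding haar_model_def by (rule sigma_algebra.space_measure_of_eq[OF sigma_algebra_restrict_kerT])

context full_rank_int_matrix
begin

lemma emeasure_haar_model_kerT: "emeasure (haar_model L) (kerT L) = 1"
proof -
  have "{x \<in> torus. ker_param L t x \<in> kerT L} = torus" if "t \<in> coset_reps L" for t
    using ker_param_in_kerT[OF that] by auto
  then have "haar_model_fun L (kerT L)
      = ennreal (1 / real (card (coset_reps L))) * ennreal (real (card (coset_reps L)))"
    by (simp add: haar_model_fun_def emeasure_lborel_torus ennreal_of_nat_eq_real_of_nat)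
  also have "\<dots> = 1"
    using card_coset_reps_pos by (simp flip: ennreal_mult)
  finally show ?thesis
    using emeasure_haar_model[of "kerT L" L] by (simp add: sets_restrict_kerT kerT_borel)
qed

lemma emeasure_lborel_ker_param_tadd_image:
  fixes a :: "real^'m"
  assumes B: "B \<subseteq> kerT L" "B \<in> sets borel"
  defines "s \<equiv> coset_rep L (real_mat L *v torus_neg a)"
  shows "emeasure lborel {x \<in> torus. ker_param L t x \<in> tadd a ` B}
    = emeasure lborel {x \<in> torus. ker_param L (tadd t s) x \<in> B}"
proof -
  let ?b = "vec_frac ((1 / gram_det L) *\<^sub>R torus_neg a)"
  have Bt: "B \<subseteq> torus" using B(1) kerT_subset_torus by blast
  have "ker_param L t x \<in> tadd a ` B \<longleftrightarrow> tadd (torus_neg a) (ker_param L t x) \<in> B" for x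
    unfolding tadd_image[OF Bt] by (simp add: ker_param_def)
  moreover have "tadd (torus_neg a) (ker_param L t x) = ker_param L (tadd t s) (tadd ?b x)" for x
    unfolding s_def by (rule tadd_ker_param)
  ultimately have "{x \<in> torus. ker_param L t x \<in> tadd a ` B}
      = {x \<in> torus. tadd ?b x \<in> ker_param L (tadd t s) -` B}"
    by auto
  also have "emeasure lborel \<dots> = emeasure lborel (torus \<inter> ker_param L (tadd t s) -` B)"
    using measurable_sets[OF ker_param_measurable B(2)]
    by (intro lborel_tadd_invariant) simp_all
  also have "torus \<inter> ker_param L (tadd t s) -` B = {x \<in> torus. ker_param L (tadd t s) x \<in> B}"
    by auto
  finally show ?thesis .
qed

lemma emeasure_haar_model_tadd_image:
  assumes a: "a \<in> kerT L" and B: "B \<in> sets (restrict_space borel (kerT L))"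
  shows "emeasure (haar_model L) (tadd a ` B) = emeasure (haar_model L) B"
proof -
  have B': "B \<subseteq> kerT L" "B \<in> sets borel" using B sets_restrict_kerT by auto
  define s where "s = coset_rep L (real_mat L *v torus_neg a)"
  have s: "s \<in> coset_reps L"
    using torus_neg_kerT[OF a] by (auto simp: s_def mem_kerT intro: coset_rep_in_coset_reps)
  have "haar_model_fun L (tadd a ` B)
      = ennreal (1 / real (card (coset_reps L)))
        * (\<Sum>t\<in>coset_reps L. emeasure lborel {x \<in> torus. ker_param L (tadd t s) x \<in> B})"
    unfolding haar_model_fun_def s_def
    using emeasure_lborel_ker_param_tadd_image[OF B'] by simp
  also have "\<dots> = haar_model_fun L B"
    using sum.reindex_bij_betw[OF bij_betw_tadd_coset_reps[OF s],
        of "\<lambda>t. emeasure lborel {x \<in> torus. ker_param L t x \<in> B}"]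
    by (simp add: haar_model_fun_def)
  finally show ?thesis
    using emeasure_haar_model[OF tadd_image_restrict_kerT_sets[OF a B]] emeasure_haar_model[OF B]
    by simp
qed

lemma haarT_is_haar: "is_haar_kerT L (haarT L)"
proof -
  have "is_haar_kerT L (haar_model L)"
    unfolding is_haar_kerT_def
    using emeasure_haar_model_kerT emeasure_haar_model_tadd_image
    by (simp add: space_haar_model sets_haar_model)
  then show ?thesis by (simp add: haarT_eq)
qed

end

section \<open>Counting solutions modulo \<open>p\<close>\<close>

definition Zp_vecs :: "nat \<Rightarrow> ('a \<Rightarrow> int) set" where
  "Zp_vecs p = {j. \<forall>i. 0 \<le> j i \<and> j i < int p}"

definition mat_mod :: "int^'m^'r \<Rightarrow> nat \<Rightarrow> ('m \<Rightarrow> int) \<Rightarrow> ('r \<Rightarrow> int)" where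
  "mat_mod L p j = (\<lambda>k. (\<Sum>i\<in>UNIV. L$k$i * j i) mod int p)"

definition add_mod :: "nat \<Rightarrow> ('a \<Rightarrow> int) \<Rightarrow> ('a \<Rightarrow> int) \<Rightarrow> ('a \<Rightarrow> int)" where
  "add_mod p j x = (\<lambda>i. (j i + x i) mod int p)"

lemma Zp_vecs_eq_PiE: "Zp_vecs p = PiE UNIV (\<lambda>_. {0..<int p})"
  by (auto simp: Zp_vecs_def PiE_UNIV_domain)

lemma card_Zp_vecs: "card (Zp_vecs p :: ('a::finite \<Rightarrow> int) set) = p ^ CARD('a)"
  by (simp add: Zp_vecs_eq_PiE card_PiE)

lemma finite_Zp_vecs: "finite (Zp_vecs p :: ('a::finite \<Rightarrow> int) set)"
  by (simp add: Zp_vecs_eq_PiE finite_PiE)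

lemma kerZp_eq: "kerZp L p = {x \<in> Zp_vecs p. mat_mod L p x = (\<lambda>_. 0)}"
  by (auto simp: kerZp_def Zp_vecs_def mat_mod_def fun_eq_iff)

lemma kerZp_subset_Zp_vecs: "kerZp L p \<subseteq> Zp_vecs p"
  by (auto simp: kerZp_eq)

lemma mat_mod_in_Zp_vecs: "p > 0 \<Longrightarrow> mat_mod L p j \<in> Zp_vecs p"
  by (simp add: mat_mod_def Zp_vecs_def)

lemma add_mod_in_Zp_vecs: "p > 0 \<Longrightarrow> add_mod p j x \<in> Zp_vecs p"
  by (simp add: add_mod_def Zp_vecs_def)

lemma sum_mod_cong:
  assumes "\<And>i. i \<in> A \<Longrightarrow> f i mod m = g i mod (m::int)"
  shows "(\<Sum>i\<in>A. f i) mod m = (\<Sum>i\<in>A. g i) mod m"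
proof -
  have "(\<Sum>i\<in>A. f i) mod m = (\<Sum>i\<in>A. f i mod m) mod m" by (simp add: mod_sum_eq)
  also have "\<dots> = (\<Sum>i\<in>A. g i mod m) mod m" using assms by (simp cong: sum.cong)
  also have "\<dots> = (\<Sum>i\<in>A. g i) mod m" by (simp add: mod_sum_eq)
  finally show ?thesis .
qed

lemma mat_mod_add_mod: "mat_mod L p (add_mod p j x) = (\<lambda>k. ((\<Sum>i\<in>UNIV. L$k$i * j i) + (\<Sum>i\<in>UNIV. L$k$i * x i)) mod int p)"
  unfolding mat_mod_def add_mod_def sum.distrib[symmetric]
  by (rule ext, rule sum_mod_cong) (simp add: mod_mult_right_eq distrib_left)

lemma mat_mod_add_mod_kerZp:
  assumes "x \<in> kerZp L p"
  shows "mat_mod L p (add_mod p j x) = mat_mod L p j"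
proof -
  have "(\<Sum>i\<in>UNIV. L$k$i * x i) mod int p = 0" for k using assms by (simp add: kerZp_def)
  then show ?thesis unfolding mat_mod_add_mod by (simp add: mat_mod_def mod_add_right_eq[symmetric])
qed

lemma add_mod_sub_mod:
  "j \<in> Zp_vecs p \<Longrightarrow> add_mod p j0 (\<lambda>i. (j i - j0 i) mod int p) = j"
  by (auto simp: add_mod_def Zp_vecs_def mod_add_right_eq fun_eq_iff)

lemma sub_mod_kerZp:
  assumes p: "p > 0" and "mat_mod L p j = mat_mod L p j0"
  shows "(\<lambda>i. (j i - j0 i) mod int p) \<in> kerZp L p"
proof -
  have "(\<Sum>i\<in>UNIV. L$k$i * ((j i - j0 i) mod int p)) mod int p
      = ((\<Sum>i\<in>UNIV. L$k$i * j i) - (\<Sum>i\<in>UNIV. L$k$i * j0 i)) mod int p" for k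
    by (simp add: sum_subtractf[symmetric] right_diff_distrib[symmetric])
      (rule sum_mod_cong, simp add: mod_mult_right_eq)
  also have "\<dots> k = 0" for k
    using fun_cong[OF assms(2), of k] by (simp add: mat_mod_def mod_diff_eq[symmetric])
  finally show ?thesis using p by (simp add: kerZp_def)
qed

lemma inj_on_add_mod: "inj_on (add_mod p j0) (Zp_vecs p)"
proof (rule inj_onI)
  fix x y assume x: "x \<in> Zp_vecs p" and y: "y \<in> Zp_vecs p" and e: "add_mod p j0 x = add_mod p j0 y"
  show "x = y"
  proof
    fix i
    have "(j0 i + x i) mod int p = (j0 i + y i) mod int p"
      using fun_cong[OF e, of i] by (simp add: add_mod_def)
    then have "x i mod int p = y i mod int p" by (metis add_diff_cancel_left' mod_diff_left_eq)
    then show "x i = y i" using x y by (simp add: Zp_vecs_def)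
  qed
qed

lemma mat_mod_fibre_eq:
  assumes p: "p > 0" and j0: "j0 \<in> Zp_vecs p"
  shows "{j \<in> Zp_vecs p. mat_mod L p j = mat_mod L p j0} = add_mod p j0 ` kerZp L p"
proof safe
  fix j assume "j \<in> Zp_vecs p" "mat_mod L p j = mat_mod L p j0"
  then show "j \<in> add_mod p j0 ` kerZp L p"
    by (intro image_eqI[where x = "\<lambda>i. (j i - j0 i) mod int p"] add_mod_sub_mod[symmetric]
        sub_mod_kerZp[OF p])
qed (use p mat_mod_add_mod_kerZp add_mod_in_Zp_vecs in auto)

lemma card_Zp_vecs_eq_mult_card_kerZp:
  fixes L :: "int^'m^'r"
  assumes p: "p > 0" and surj: "mat_mod L p ` Zp_vecs p = Zp_vecs p"
  shows "card (Zp_vecs p :: ('m \<Rightarrow> int) set) = card (Zp_vecs p :: ('r \<Rightarrow> int) set) * card (kerZp L p)"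
proof -
  let ?F = "\<lambda>c. {j \<in> Zp_vecs p. mat_mod L p j = c}"
  have "card (Zp_vecs p :: ('m \<Rightarrow> int) set) = card (\<Union>c\<in>(Zp_vecs p :: ('r \<Rightarrow> int) set). ?F c)"
    using mat_mod_in_Zp_vecs[OF p] by (intro arg_cong[where f = card]) auto
  also have "\<dots> = (\<Sum>c\<in>Zp_vecs p. card (?F c))"
    by (rule card_UN_disjoint) (auto simp: finite_Zp_vecs)
  also have "\<dots> = (\<Sum>c\<in>(Zp_vecs p :: ('r \<Rightarrow> int) set). card (kerZp L p))"
  proof (rule sum.cong[OF refl])
    fix c :: "'r \<Rightarrow> int" assume "c \<in> Zp_vecs p"
    then obtain j0 where j0: "j0 \<in> Zp_vecs p" "c = mat_mod L p j0" using surj by blast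
    have "card (?F c) = card (add_mod p j0 ` kerZp L p)"
      using mat_mod_fibre_eq[OF p j0(1), of L] j0(2) by simp
    also have "\<dots> = card (kerZp L p)"
      by (rule card_image, rule inj_on_subset[OF inj_on_add_mod kerZp_subset_Zp_vecs])
    finally show "card (?F c) = card (kerZp L p)" .
  qed
  finally show ?thesis by simp
qed

definition gram_det_int :: "int^'m^'r \<Rightarrow> int" where
  "gram_det_int L = \<lfloor>gram_det L\<rfloor>"

lemma of_int_gram_det_int: "real_of_int (gram_det_int L) = gram_det L"
  using gram_det_Ints[of L] by (auto simp: gram_det_int_def elim: Ints_cases)

context full_rank_int_matrix
begin

lemma gram_det_int_nonzero: "gram_det_int L \<noteq> 0"
  using of_int_gram_det_int[of L] gram_det_nonzero by auto

text \<open>The solution is \<open>w = L\<^sup>T (gram_det L \<cdot> (L L\<^sup>T)\<^sup>-\<^sup>1 c)\<close>, an integer vector by Cramer's rule.\<close>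

lemma exists_int_solution_gram_det_mult:
  fixes c :: "'r \<Rightarrow> int"
  shows "\<exists>w. \<forall>k. (\<Sum>i\<in>UNIV. L$k$i * w i) = gram_det_int L * c k"
proof -
  define w where "w = transpose (real_mat L) *v (gram_det L *\<^sub>R (gram_inv L *v (\<chi> k. real_of_int (c k))))"
  have "int_vec w"
    unfolding w_def by (intro int_mat_mult_int_vec[OF int_mat_transpose[OF int_mat_real_mat]]
        int_vec_gram_inv) (simp add: int_vec_def)
  define wI where "wI i = \<lfloor>w$i\<rfloor>" for i
  have wI: "w$i = real_of_int (wI i)" for i
    using \<open>int_vec w\<close> by (auto simp: wI_def int_vec_def elim!: Ints_cases)
  have "real_mat L *v w = gram_det L *\<^sub>R (\<chi> k. real_of_int (c k))"
    unfolding w_def using gram_mult_gram_inv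
    by (simp add: gram_def matrix_vector_mul_assoc matrix_vector_mult_scaleR matrix_mul_assoc
        del: transpose_matrix_vector)
  then have "real_of_int (\<Sum>i\<in>UNIV. L$k$i * wI i) = real_of_int (gram_det_int L * c k)" for k
    by (simp add: vec_eq_iff matrix_vector_mult_def real_mat_def wI of_int_gram_det_int)
  then show ?thesis by (simp only: of_int_eq_iff) blast
qed

lemma mat_mod_surj:
  assumes p: "prime p" and nd: "\<not> int p dvd gram_det_int L"
  shows "mat_mod L p ` Zp_vecs p = Zp_vecs p"
proof
  show "mat_mod L p ` Zp_vecs p \<subseteq> Zp_vecs p"
    using mat_mod_in_Zp_vecs prime_gt_0_nat[OF p] by blast
next
  show "Zp_vecs p \<subseteq> mat_mod L p ` Zp_vecs p"
  proof
    fix c :: "'r \<Rightarrow> int" assume c: "c \<in> Zp_vecs p"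
    obtain w where Lw: "\<And>k. (\<Sum>i\<in>UNIV. L$k$i * w i) = gram_det_int L * c k"
      using exists_int_solution_gram_det_mult by blast
    have "coprime (int p) (gram_det_int L)" using p nd by (intro prime_imp_coprime) auto
    then obtain u v where uv: "u * gram_det_int L + v * int p = 1"
      using bezout_int[of "gram_det_int L" "int p"] by (auto simp: coprime_iff_gcd_eq_1 gcd.commute)
    define j where "j i = (u * w i) mod int p" for i
    have "mat_mod L p j k = c k" for k
    proof -
      have "mat_mod L p j k = (u * (\<Sum>i\<in>UNIV. L$k$i * w i)) mod int p"
        unfolding mat_mod_def j_def sum_distrib_left
        by (rule sum_mod_cong) (simp add: mod_mult_right_eq mult.left_commute)
      also have "u * (\<Sum>i\<in>UNIV. L$k$i * w i) = c k + (- v * c k) * int p"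
        using arg_cong[OF uv, of "\<lambda>z. z * c k"] unfolding Lw by (simp add: algebra_simps)
      also have "(c k + (- v * c k) * int p) mod int p = c k mod int p"
        by (rule mod_mult_self1)
      also have "\<dots> = c k"
        using c by (simp add: Zp_vecs_def)
      finally show ?thesis .
    qed
    moreover have "j \<in> Zp_vecs p" using prime_gt_0_nat[OF p] by (simp add: j_def Zp_vecs_def)
    ultimately show "c \<in> mat_mod L p ` Zp_vecs p"
      by (intro image_eqI[where x = j]) auto
  qed
qed

lemma card_kerZp:
  assumes p: "prime p" and nd: "\<not> int p dvd gram_det_int L"
  shows "card (kerZp L p) = p ^ (CARD('m) - CARD('r))"
proof -
  have p0: "p > 0" using p prime_gt_0_nat by auto
  have "p ^ CARD('r) * p ^ (CARD('m) - CARD('r)) = p ^ CARD('r) * card (kerZp L p)"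
    using card_Zp_vecs_eq_mult_card_kerZp[OF p0 mat_mod_surj[OF p nd]] card_rows_le_card_cols
    by (simp add: card_Zp_vecs flip: power_add)
  then show ?thesis using p0 by simp
qed

end

lemma pbox_borel: "pbox p j \<in> sets (borel :: (real^'m) measure)"
proof -
  have "pbox p j = (\<Inter>i. {x::real^'m. real_of_int (j i) / real p \<le> x$i}
      \<inter> {x. x$i < real_of_int (j i) / real p + 1 / real p})"
    by (auto simp: pbox_def)
  also have "\<dots> \<in> sets borel" by measurable
  finally show ?thesis .
qed

lemma mem_pbox_iff: "p > 0 \<Longrightarrow> x \<in> pbox p j \<longleftrightarrow> (\<forall>i. \<lfloor>real p * x$i\<rfloor> = j i)"
  by (simp add: pbox_def floor_eq_iff divide_le_eq less_divide_eq add_divide_distrib[symmetric]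
      mult.commute)

lemma torus_floor_pbox:
  assumes p: "p > 0" and x: "x \<in> torus"
  shows "x \<in> pbox p (\<lambda>i. \<lfloor>real p * x$i\<rfloor>)" "(\<lambda>i. \<lfloor>real p * x$i\<rfloor>) \<in> Zp_vecs p"
proof -
  have "0 \<le> real p * x$i" "real p * x$i < real p" for i
    using x p by (auto simp: mem_torus)
  then show "(\<lambda>i. \<lfloor>real p * x$i\<rfloor>) \<in> Zp_vecs p" by (simp add: Zp_vecs_def floor_less_iff)
  show "x \<in> pbox p (\<lambda>i. \<lfloor>real p * x$i\<rfloor>)" by (simp add: mem_pbox_iff[OF p])
qed

lemma p_measurable_iff_floor:
  assumes A: "p_measurable p A" and p: "p > 0"
  shows "y \<in> A \<longleftrightarrow> real_of_int \<lfloor>real p * y\<rfloor> / real p \<in> A"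
proof -
  obtain X where X: "X \<subseteq> {1..p}" "A = (\<Union>x\<in>X. {real (x - 1) / real p ..< real x / real p})"
    using A by (auto simp: p_measurable_def)
  have mem: "z \<in> {real (x - 1) / real p ..< real x / real p} \<longleftrightarrow> \<lfloor>real p * z\<rfloor> = int x - 1"
    if "x \<ge> 1" for z x
  proof -
    have "z \<in> {real (x - 1) / real p ..< real x / real p} \<longleftrightarrow> real x - 1 \<le> real p * z \<and> real p * z < real x"
      using p that by (simp add: of_nat_diff divide_le_eq less_divide_eq mult.commute)
    then show ?thesis by (simp add: floor_eq_iff)
  qed
  have fl: "\<lfloor>real p * (real_of_int \<lfloor>real p * y\<rfloor> / real p)\<rfloor> = \<lfloor>real p * y\<rfloor>" using p by simp
  let ?I = "\<lambda>x. {real (x - 1) / real p ..< real x / real p}"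
  have "y \<in> A \<longleftrightarrow> (\<exists>x\<in>X. y \<in> ?I x)" using X(2) by blast
  also have "\<dots> \<longleftrightarrow> (\<exists>x\<in>X. \<lfloor>real p * y\<rfloor> = int x - 1)"
  proof (rule bex_cong[OF refl])
    fix x assume "x \<in> X"
    then have "x \<ge> 1" using X(1) by auto
    then show "y \<in> ?I x \<longleftrightarrow> \<lfloor>real p * y\<rfloor> = int x - 1" by (rule mem)
  qed
  also have "\<dots> \<longleftrightarrow> (\<exists>x\<in>X. real_of_int \<lfloor>real p * y\<rfloor> / real p \<in> ?I x)"
  proof (rule bex_cong[OF refl])
    fix x assume "x \<in> X"
    then have "x \<ge> 1" using X(1) by auto
    from mem[OF this, of "real_of_int \<lfloor>real p * y\<rfloor> / real p"]
    show "\<lfloor>real p * y\<rfloor> = int x - 1 \<longleftrightarrow> real_of_int \<lfloor>real p * y\<rfloor> / real p \<in> ?I x"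
      by (simp only: fl)
  qed
  also have "\<dots> \<longleftrightarrow> real_of_int \<lfloor>real p * y\<rfloor> / real p \<in> A" using X(2) by blast
  finally show ?thesis .
qed

definition lattice_point :: "nat \<Rightarrow> ('m \<Rightarrow> int) \<Rightarrow> real^'m" where
  "lattice_point p x = vec_frac (\<chi> i. real_of_int (x i) / real p)"

lemma frac_add_pbox_coord:
  fixes xi ji :: int
  assumes p: "p > 0" and s: "0 \<le> s" "s < 1 / real p"
  shows "frac (real_of_int xi / real p + (real_of_int ji / real p + s))
    = real_of_int ((ji + xi) mod int p) / real p + s"
proof -
  let ?n = "ji + xi"
  have "real_of_int ?n = real_of_int (?n div int p * int p + ?n mod int p)"
    by (simp only: div_mult_mod_eq)
  then have "real_of_int ?n = real_of_int (?n div int p) * real p + real_of_int (?n mod int p)"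
    by (simp only: of_int_add of_int_mult of_int_of_nat_eq)
  then have e: "real_of_int xi / real p + (real_of_int ji / real p + s)
      = real_of_int (?n div int p) + (real_of_int (?n mod int p) / real p + s)"
    using p by (simp add: field_simps)
  have "0 \<le> ?n mod int p" "?n mod int p < int p"
    using p by simp_all
  then have "real_of_int (?n mod int p) + 1 \<le> real p" by linarith
  then have "real_of_int (?n mod int p) / real p + 1 / real p \<le> 1"
    using p by (simp add: field_simps)
  then show ?thesis
    unfolding e using s \<open>0 \<le> ?n mod int p\<close> by (simp add: frac_unique_iff)
qed

lemma tadd_lattice_point_pbox:
  assumes p: "p > 0" and y: "y \<in> pbox p j"
  shows "tadd (lattice_point p x) y \<in> pbox p (add_mod p j x)"
proof -
  have "real_of_int (add_mod p j x i) / real p \<le> tadd (lattice_point p x) y $ i \<and>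
        tadd (lattice_point p x) y $ i < real_of_int (add_mod p j x i) / real p + 1 / real p" for i
  proof -
    define s where "s = y$i - real_of_int (j i) / real p"
    have "real_of_int (j i) / real p \<le> y$i" "y$i < real_of_int (j i) / real p + 1 / real p"
      using y by (auto simp: pbox_def)
    then have s: "0 \<le> s" "s < 1 / real p" unfolding s_def by linarith+
    have "tadd (lattice_point p x) y $ i
        = frac (real_of_int (x i) / real p + (real_of_int (j i) / real p + s))"
      by (simp add: tadd_def lattice_point_def vec_frac_nth frac_frac_add s_def)
    also have "\<dots> = real_of_int (add_mod p j x i) / real p + s"
      using frac_add_pbox_coord[OF p s] by (simp add: add_mod_def)
    finally show ?thesis using s by simp
  qed
  then show ?thesis by (simp add: pbox_def)
qed

lemma add_mod_uminus_cancel: "j \<in> Zp_vecs p \<Longrightarrow> add_mod p (add_mod p j x) (\<lambda>i. - x i) = j"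
proof
  fix i assume "j \<in> Zp_vecs p"
  have "((j i + x i) mod int p + - x i) mod int p = ((j i + x i) + - x i) mod int p"
    by (simp add: mod_diff_left_eq)
  also have "\<dots> = j i" using \<open>j \<in> Zp_vecs p\<close> by (simp add: Zp_vecs_def)
  finally show "add_mod p (add_mod p j x) (\<lambda>i. - x i) i = j i" by (simp add: add_mod_def)
qed

lemma torus_neg_lattice_point: "torus_neg (lattice_point p x) = lattice_point p (\<lambda>i. - x i)"
proof -
  have "(\<chi> i. real_of_int (- x i) / real p) = - (\<chi> i. real_of_int (x i) / real p)"
    by (simp add: vec_eq_iff)
  moreover have "vec_cong (- vec_frac (\<chi> i. real_of_int (x i) / real p)) (- (\<chi> i. real_of_int (x i) / real p))"
    by (rule vec_cong_uminus[OF vec_cong_vec_frac])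
  ultimately show ?thesis
    unfolding lattice_point_def torus_neg_def vec_frac_eq_iff by simp
qed

lemma lattice_point_kerT:
  fixes L :: "int^'m^'r"
  assumes p: "p > 0" and x: "x \<in> kerZp L p"
  shows "lattice_point p x \<in> kerT L"
proof -
  let ?v = "(\<chi> i. real_of_int (x i) / real p) :: real^'m"
  have "(real_mat L *v ?v) $ k \<in> \<int>" for k
  proof -
    have "int p dvd (\<Sum>i\<in>UNIV. L$k$i * x i)" using x by (simp add: kerZp_def mod_eq_0_iff_dvd)
    then obtain q where q: "(\<Sum>i\<in>UNIV. L$k$i * x i) = int p * q" by (auto simp: dvd_def)
    have "(real_mat L *v ?v) $ k = real_of_int (\<Sum>i\<in>UNIV. L$k$i * x i) / real p"
      by (simp add: matrix_vector_mult_def real_mat_def sum_divide_distrib)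
    then show ?thesis using q p by simp
  qed
  then have "int_vec (real_mat L *v ?v)" by (simp add: int_vec_def)
  then show ?thesis
    unfolding mem_kerT lattice_point_def
    using vec_cong_int_vec[OF vec_cong_int_mat[OF int_mat_real_mat vec_cong_vec_frac]] by auto
qed

text \<open>A box meeting \<open>ker\<^sub>T L\<close> has \<open>L j\<close> within distance \<open>abs_sum L\<close> of \<open>p \<int>\<^sup>r\<close>; this bounds the number
  of residue classes \<open>L j mod p\<close> that occur, uniformly in \<open>p\<close>.\<close>

definition abs_sum :: "int^'m^'r \<Rightarrow> int" where
  "abs_sum L = (\<Sum>k\<in>UNIV. \<Sum>i\<in>UNIV. \<bar>L$k$i\<bar>)"

definition small_vecs :: "int^'m^'r \<Rightarrow> ('r \<Rightarrow> int) set" where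
  "small_vecs L = {v. \<forall>k. \<bar>v k\<bar> \<le> abs_sum L}"

lemma finite_small_vecs: "finite (small_vecs L)"
proof (rule finite_subset)
  show "small_vecs L \<subseteq> PiE UNIV (\<lambda>_. {-abs_sum L..abs_sum L})"
  proof
    fix v assume v: "v \<in> small_vecs L"
    have "v k \<in> {-abs_sum L..abs_sum L}" for k
    proof -
      have "\<bar>v k\<bar> \<le> abs_sum L" using v by (simp add: small_vecs_def)
      then show ?thesis unfolding atLeastAtMost_iff by arith
    qed
    then show "v \<in> PiE UNIV (\<lambda>_. {-abs_sum L..abs_sum L})" by (simp add: PiE_UNIV_domain)
  qed
qed (simp add: finite_PiE)

lemma card_small_vecs_pos: "card (small_vecs L) > 0"
  using finite_small_vecs[of L]
  by (auto simp: card_gt_0_iff small_vecs_def abs_sum_def intro!: sum_nonneg exI[of _ "\<lambda>_. 0"])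

lemma mat_mod_pbox_kerT:
  fixes L :: "int^'m^'r"
  assumes p: "p > 0" and y: "y \<in> pbox p j" "y \<in> kerT L"
  shows "mat_mod L p j \<in> (\<lambda>v k. v k mod int p) ` small_vecs L"
proof -
  have d: "\<bar>real_of_int (j i) - real p * y$i\<bar> \<le> 1" for i
  proof -
    have "\<lfloor>real p * y$i\<rfloor> = j i" using mem_pbox_iff[OF p] y(1) by auto
    then show ?thesis by linarith
  qed
  define N where "N k = \<lfloor>\<Sum>i\<in>UNIV. real_of_int (L$k$i) * y$i\<rfloor>" for k
  have N: "real_of_int (N k) = (\<Sum>i\<in>UNIV. real_of_int (L$k$i) * y$i)" for k
    using y(2) unfolding kerT_def N_def by (auto elim!: Ints_cases)
  define v where "v k = (\<Sum>i\<in>UNIV. L$k$i * j i) - int p * N k" for k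
  have "\<bar>v k\<bar> \<le> abs_sum L" for k
  proof -
    have "real_of_int (v k) = (\<Sum>i\<in>UNIV. real_of_int (L$k$i) * (real_of_int (j i) - real p * y$i))"
      by (simp add: v_def N sum_subtractf right_diff_distrib sum_distrib_left mult.left_commute)
    also have "\<bar>\<dots>\<bar> \<le> (\<Sum>i\<in>UNIV. real_of_int \<bar>L$k$i\<bar>)"
      by (rule order_trans[OF sum_abs sum_mono]) (simp add: abs_mult mult_left_le d)
    also have "\<dots> = real_of_int (\<Sum>i\<in>UNIV. \<bar>L$k$i\<bar>)" by simp
    finally have "\<bar>v k\<bar> \<le> (\<Sum>i\<in>UNIV. \<bar>L$k$i\<bar>)" by linarith
    also have "\<dots> \<le> abs_sum L" unfolding abs_sum_def
      by (rule member_le_sum[where f = "\<lambda>k. \<Sum>i\<in>UNIV. \<bar>L$k$i\<bar>"]) (auto intro: sum_nonneg)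
    finally show ?thesis .
  qed
  moreover have "mat_mod L p j = (\<lambda>k. v k mod int p)"
    by (simp add: v_def mat_mod_def fun_eq_iff mod_diff_eq[symmetric])
  ultimately show ?thesis by (auto simp: small_vecs_def)
qed

section \<open>Decomposition of \<open>S\<^sub>L\<^sub>,\<^sub>T\<close> into shifted counts modulo \<open>p\<close>\<close>

definition boxes_in :: "nat \<Rightarrow> ('m::finite \<Rightarrow> real set) \<Rightarrow> ('m \<Rightarrow> int) set" where
  "boxes_in p A = {j \<in> Zp_vecs p. \<forall>i. j i \<in> prime_set p (A i)}"

definition shifted_solutions :: "int^'m^'r \<Rightarrow> nat \<Rightarrow> ('m \<Rightarrow> real set) \<Rightarrow> ('m \<Rightarrow> int) \<Rightarrow> ('m \<Rightarrow> int) set" where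
  "shifted_solutions L p A j = kerZp L p \<inter> {x. \<forall>i. x i \<in> shiftZ p (prime_set p (A i)) (j i)}"

lemma finite_boxes_in: "finite (boxes_in p A)"
  by (rule finite_subset[OF _ finite_Zp_vecs]) (auto simp: boxes_in_def)

lemma Jset_subset_Zp_vecs: "Jset L p \<subseteq> Zp_vecs p"
  by (auto simp: Jset_def Zp_vecs_def)

lemma finite_Jset: "finite (Jset L p)"
  by (rule finite_subset[OF Jset_subset_Zp_vecs finite_Zp_vecs])

lemma box_product_kerT_eq:
  assumes p: "p > 0" and A: "\<forall>i. p_measurable p (A i)"
  shows "{x. \<forall>i. x$i \<in> A i} \<inter> kerT L = (\<Union>j\<in>boxes_in p A. pbox p j \<inter> kerT L)"
proof -
  have box_iff: "(\<forall>i. x$i \<in> A i) \<longleftrightarrow> (\<lambda>i. \<lfloor>real p * x$i\<rfloor>) \<in> boxes_in p A" if "x \<in> torus" for x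
  proof -
    have "x$i \<in> A i \<longleftrightarrow> \<lfloor>real p * x$i\<rfloor> \<in> prime_set p (A i)" for i
      using p_measurable_iff_floor[OF A[rule_format] p] torus_floor_pbox(2)[OF p that]
      by (auto simp: prime_set_def Zp_vecs_def)
    then show ?thesis using torus_floor_pbox(2)[OF p that] by (simp add: boxes_in_def)
  qed
  show ?thesis
  proof safe
    fix x assume x: "\<forall>i. x$i \<in> A i" "x \<in> kerT L"
    then have xt: "x \<in> torus" using kerT_subset_torus by blast
    then show "x \<in> (\<Union>j\<in>boxes_in p A. pbox p j \<inter> kerT L)"
      using box_iff[OF xt] x torus_floor_pbox(1)[OF p xt] by blast
  next
    fix x j i assume j: "j \<in> boxes_in p A" and x: "x \<in> pbox p j" "x \<in> kerT L"
    have "j = (\<lambda>i. \<lfloor>real p * x$i\<rfloor>)" using x(1) by (auto simp: mem_pbox_iff[OF p])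
    moreover have "x \<in> torus" using x(2) kerT_subset_torus by blast
    ultimately show "x$i \<in> A i" using box_iff j by blast
  qed
qed

lemma tadd_lattice_point_pbox_kerT:
  assumes p: "p > 0" and j: "j \<in> Zp_vecs p" and x: "x \<in> kerZp L p"
  shows "tadd (lattice_point p x) ` (pbox p j \<inter> kerT L) = pbox p (add_mod p j x) \<inter> kerT L"
proof safe
  have a: "lattice_point p x \<in> kerT L" by (rule lattice_point_kerT[OF p x])
  fix y assume "y \<in> pbox p j" "y \<in> kerT L"
  then show "tadd (lattice_point p x) y \<in> pbox p (add_mod p j x)" "tadd (lattice_point p x) y \<in> kerT L"
    using tadd_lattice_point_pbox[OF p] tadd_kerT[OF a] by auto
next
  have a: "lattice_point p x \<in> kerT L" by (rule lattice_point_kerT[OF p x])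
  fix z assume z: "z \<in> pbox p (add_mod p j x)" "z \<in> kerT L"
  let ?y = "tadd (torus_neg (lattice_point p x)) z"
  have "?y \<in> pbox p (add_mod p (add_mod p j x) (\<lambda>i. - x i))"
    unfolding torus_neg_lattice_point by (rule tadd_lattice_point_pbox[OF p z(1)])
  then have "?y \<in> pbox p j \<inter> kerT L"
    using add_mod_uminus_cancel[OF j] tadd_kerT[OF torus_neg_kerT[OF a] z(2)] by simp
  moreover have "z \<in> torus" using z(2) kerT_subset_torus by blast
  then have "z = tadd (lattice_point p x) ?y" by (simp only: tadd_torus_neg_cancel)
  ultimately show "z \<in> tadd (lattice_point p x) ` (pbox p j \<inter> kerT L)" by (rule rev_image_eqI)
qed

lemma add_mod_in_boxes_in_iff:
  assumes p: "p > 0" and x: "x \<in> Zp_vecs p"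
  shows "add_mod p j x \<in> boxes_in p A \<longleftrightarrow> (\<forall>i. x i \<in> shiftZ p (prime_set p (A i)) (j i))"
  using p x add_mod_in_Zp_vecs[OF p]
  by (auto simp: boxes_in_def shiftZ_def add_mod_def Zp_vecs_def add.commute)

context full_rank_int_matrix
begin

lemma pbox_kerT_sets: "pbox p j \<inter> kerT L \<in> sets (haarT L)"
  using haarT_is_haar pbox_borel kerT_borel by (auto simp: is_haar_kerT_def sets_restrict_kerT)

lemma S_T_eq_sum_pbox:
  assumes p: "p > 0" and A: "\<forall>i. p_measurable p (A i)"
  shows "S_T L A = (\<Sum>j\<in>boxes_in p A. muT L (pbox p j))"
proof -
  interpret finite_measure "haarT L" by (rule haar_finite_measure[OF haarT_is_haar])
  have "disjoint_family_on (\<lambda>j. pbox p j \<inter> kerT L) (boxes_in p A)"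
    by (auto simp: disjoint_family_on_def mem_pbox_iff[OF p] fun_eq_iff)
  then have "measure (haarT L) (\<Union>j\<in>boxes_in p A. pbox p j \<inter> kerT L)
      = (\<Sum>j\<in>boxes_in p A. measure (haarT L) (pbox p j \<inter> kerT L))"
    by (intro finite_measure_finite_Union finite_boxes_in) (auto intro: pbox_kerT_sets)
  then show ?thesis
    by (simp add: S_T_def muT_def box_product_kerT_eq[OF p A])
qed

lemma muT_pbox_add_mod:
  assumes p: "p > 0" and j: "j \<in> Zp_vecs p" and x: "x \<in> kerZp L p"
  shows "muT L (pbox p (add_mod p j x)) = muT L (pbox p j)"
  using haarT_is_haar lattice_point_kerT[OF p x] pbox_kerT_sets
  unfolding muT_def tadd_lattice_point_pbox_kerT[OF p j x, symmetric]
  by (simp add: is_haar_kerT_def measure_def)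

lemma add_mod_in_Jset:
  assumes p: "p > 0" and j: "j \<in> Jset L p" and x: "x \<in> kerZp L p"
  shows "add_mod p j x \<in> Jset L p"
proof -
  have "muT L (pbox p (add_mod p j x)) = muT L (pbox p j)"
    using muT_pbox_add_mod[OF p _ x] j Jset_subset_Zp_vecs by blast
  then show ?thesis using j add_mod_in_Zp_vecs[OF p] by (simp add: Jset_def Zp_vecs_def)
qed

lemma class_eq_add_mod_image:
  assumes p: "p > 0" and j0: "j0 \<in> Jset L p"
  shows "{j \<in> boxes_in p A \<inter> Jset L p. mat_mod L p j = mat_mod L p j0}
    = add_mod p j0 ` shifted_solutions L p A j0"
proof -
  have j0': "j0 \<in> Zp_vecs p" using j0 Jset_subset_Zp_vecs by blast
  have "{j \<in> boxes_in p A \<inter> Jset L p. mat_mod L p j = mat_mod L p j0}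
      = {j \<in> Zp_vecs p. mat_mod L p j = mat_mod L p j0} \<inter> boxes_in p A"
    using add_mod_in_Jset[OF p j0] mat_mod_fibre_eq[OF p j0', of L] by (auto simp: boxes_in_def)
  also have "\<dots> = add_mod p j0 ` shifted_solutions L p A j0"
    using add_mod_in_boxes_in_iff[OF p] kerZp_subset_Zp_vecs
    unfolding mat_mod_fibre_eq[OF p j0'] shifted_solutions_def by blast
  finally show ?thesis .
qed

lemma sum_class_eq:
  assumes p: "p > 0" and j0: "j0 \<in> Jset L p"
  shows "(\<Sum>j\<in>{j \<in> boxes_in p A \<inter> Jset L p. mat_mod L p j = mat_mod L p j0}. muT L (pbox p j))
    = real (card (shifted_solutions L p A j0)) * muT L (pbox p j0)"
proof -
  have j0': "j0 \<in> Zp_vecs p" using j0 Jset_subset_Zp_vecs by blast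
  have "inj_on (add_mod p j0) (shifted_solutions L p A j0)"
    by (rule inj_on_subset[OF inj_on_add_mod]) (use kerZp_subset_Zp_vecs in \<open>auto simp: shifted_solutions_def\<close>)
  then have "(\<Sum>j\<in>add_mod p j0 ` shifted_solutions L p A j0. muT L (pbox p j))
      = (\<Sum>x\<in>shifted_solutions L p A j0. muT L (pbox p j0))"
    by (simp add: sum.reindex muT_pbox_add_mod[OF p j0'] shifted_solutions_def)
  then show ?thesis unfolding class_eq_add_mod_image[OF p j0] by simp
qed

lemma S_T_eq_sum_classes:
  assumes p: "p > 0" and A: "\<forall>i. p_measurable p (A i)"
  defines "rep \<equiv> inv_into (Jset L p) (mat_mod L p)"
  shows "S_T L A = (\<Sum>c\<in>mat_mod L p ` Jset L p.
    real (card (shifted_solutions L p A (rep c))) * muT L (pbox p (rep c)))"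
proof -
  have "muT L (pbox p j) = 0" if "j \<in> boxes_in p A - Jset L p" for j
  proof -
    have "\<not> muT L (pbox p j) > 0" using that by (auto simp: boxes_in_def Jset_def Zp_vecs_def)
    moreover have "muT L (pbox p j) \<ge> 0" by (simp add: muT_def)
    ultimately show ?thesis by simp
  qed
  then have "S_T L A = (\<Sum>j\<in>boxes_in p A \<inter> Jset L p. muT L (pbox p j))"
    unfolding S_T_eq_sum_pbox[OF p A] by (intro sum.mono_neutral_right finite_boxes_in) auto
  also have "\<dots> = (\<Sum>c\<in>mat_mod L p ` Jset L p.
      \<Sum>j\<in>{j \<in> boxes_in p A \<inter> Jset L p. mat_mod L p j = c}. muT L (pbox p j))"
    by (rule sum.group[symmetric]) (auto simp: finite_Jset finite_boxes_in)
  also have "\<dots> = (\<Sum>c\<in>mat_mod L p ` Jset L p.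
      real (card (shifted_solutions L p A (rep c))) * muT L (pbox p (rep c)))"
  proof (rule sum.cong[OF refl])
    fix c assume "c \<in> mat_mod L p ` Jset L p"
    then have "rep c \<in> Jset L p" "mat_mod L p (rep c) = c"
      by (simp_all add: rep_def inv_into_into f_inv_into_f)
    then show "(\<Sum>j\<in>{j \<in> boxes_in p A \<inter> Jset L p. mat_mod L p j = c}. muT L (pbox p j))
        = real (card (shifted_solutions L p A (rep c))) * muT L (pbox p (rep c))"
      using sum_class_eq[OF p, of "rep c" A] by simp
  qed
  finally show ?thesis .
qed

lemma card_shifted_solutions_mult_muT:
  assumes p: "prime p" and nd: "\<not> int p dvd gram_det_int L"
  shows "real (card (shifted_solutions L p A j)) * muT L (pbox p j)
    = lam L p j * S_Zp L p (\<lambda>i. shiftZ p (prime_set p (A i)) (j i))"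
  using prime_gt_0_nat[OF p]
  by (simp add: lam_def S_Zp_def card_kerZp[OF p nd] shifted_solutions_def)

lemma not_dvd_gram_det_int: "nat \<bar>gram_det_int L\<bar> < p \<Longrightarrow> \<not> int p dvd gram_det_int L"
  using dvd_imp_le_int[OF gram_det_int_nonzero, of "int p"] by linarith

lemma card_mat_mod_Jset_le:
  assumes p: "p > 0"
  shows "card (mat_mod L p ` Jset L p) \<le> card (small_vecs L)"
proof -
  have "mat_mod L p ` Jset L p \<subseteq> (\<lambda>v k. v k mod int p) ` small_vecs L"
  proof
    fix c assume "c \<in> mat_mod L p ` Jset L p"
    then obtain j where j: "j \<in> Jset L p" "c = mat_mod L p j" by blast
    then have "pbox p j \<inter> kerT L \<noteq> {}" by (auto simp: Jset_def muT_def)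
    then show "c \<in> (\<lambda>v k. v k mod int p) ` small_vecs L"
      using mat_mod_pbox_kerT[OF p] j(2) by blast
  qed
  then have "card (mat_mod L p ` Jset L p) \<le> card ((\<lambda>v k. v k mod int p) ` small_vecs L)"
    by (intro card_mono finite_imageI finite_small_vecs)
  also have "\<dots> \<le> card (small_vecs L)" by (rule card_image_le[OF finite_small_vecs])
  finally show ?thesis .
qed

lemma S_T_decomposition:
  assumes p: "prime p" and nd: "\<not> int p dvd gram_det_int L" and A: "\<forall>i. p_measurable p (A i)"
  shows "\<exists>Js. finite Js \<and> Js \<subseteq> Jset L p \<and> card Js \<le> card (small_vecs L) \<and>
    S_T L A = (\<Sum>j\<in>Js. lam L p j * S_Zp L p (\<lambda>i. shiftZ p (prime_set p (A i)) (j i)))"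
proof -
  have p0: "p > 0" using prime_gt_0_nat[OF p] .
  let ?rep = "inv_into (Jset L p) (mat_mod L p)"
  let ?C = "mat_mod L p ` Jset L p"
  have inj: "inj_on ?rep ?C" by (rule inj_on_inv_into) simp
  have "S_T L A = (\<Sum>c\<in>?C. lam L p (?rep c)
      * S_Zp L p (\<lambda>i. shiftZ p (prime_set p (A i)) (?rep c i)))"
    using S_T_eq_sum_classes[OF p0 A] by (simp add: card_shifted_solutions_mult_muT[OF p nd])
  also have "\<dots> = (\<Sum>j\<in>?rep ` ?C. lam L p j * S_Zp L p (\<lambda>i. shiftZ p (prime_set p (A i)) (j i)))"
    by (rule sum.reindex[OF inj, symmetric, unfolded comp_def])
  finally have "S_T L A = \<dots>" .
  moreover have "card (?rep ` ?C) \<le> card (small_vecs L)"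
    using card_mat_mod_Jset_le[OF p0] by (simp add: card_image[OF inj])
  moreover have "?rep ` ?C \<subseteq> Jset L p" by (auto intro: inv_into_into)
  moreover have "finite (?rep ` ?C)" by (intro finite_imageI finite_Jset)
  ultimately show ?thesis by blast
qed

end

theorem lemma2p5:
  fixes L :: "int^'m^'r"
  assumes "rank (\<chi> k i. real_of_int (L$k$i)) = CARD('r)"
  shows "\<exists>KL::nat. KL > 0 \<and> (\<exists>p0::nat. \<forall>p. prime p \<and> p \<ge> p0 \<longrightarrow>
           (\<forall>A :: 'm \<Rightarrow> real set. (\<forall>i. p_measurable p (A i)) \<longrightarrow>
              (\<exists>Js. finite Js \<and> Js \<subseteq> Jset L p \<and> card Js \<le> KL \<and>
                 S_T L A = (\<Sum>j\<in>Js. lam L p j * S_Zp L p (\<lambda>i. shiftZ p (prime_set p (A i)) (j i))))))"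
proof -
  interpret full_rank_int_matrix L
    by unfold_locales (simp add: real_mat_def assms)
  show ?thesis
    by (intro exI[of _ "card (small_vecs L)"] conjI card_small_vecs_pos
        exI[of _ "nat \<bar>gram_det_int L\<bar> + 1"] allI impI S_T_decomposition not_dvd_gram_det_int)
      auto
qed

end
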